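(* Let $p>1$, $q>1$ with $p^{-1}+q^{-1}>1$. Then the following holds, with a constant $C_{p,q}$ depending only on $p$ and $q$. For every interval $[a;b]$ and every two functions $f,g:[a;b]\to\mathbb{R}$ with no common points of discontinuity such that $f$ has finite $p$-variation and $g$ has finite $q$-variation on $[a;b]$, the Riemann–Stieltjes integral $\int_a^b f\,\mathrm{d}g$ exists and \[ \left|\int_a^b f\,\mathrm{d}g-f(a)\left[g(b)-g(a)\right]\right|\le C_{p,q}\,\|f\|_{p\text{-var},[a;b]}^{\,p-p/q}\,\|f\|_{\mathrm{osc},[a;b]}^{\,1+p/q-p}\,\|g\|_{q\text{-var},[a;b]}. \]
   Context: For $r>0$ the $r$-variation of $h:[a;b]\to\mathbb{R}$ is $V^{r}(h,[a;b])=\sup_n\sup_{a\le t_1<\dots<t_n\le b}\sum_{i=2}^{n}|h(t_i)-h(t_{i-1})|^{r}$, and $\|h\|_{r\text{-var},[a;b]}:=(V^{r}(h,[a;b]))^{1/r}$. Also $\|h\|_{\mathrm{osc},[a;b]}:=\sup_{a\le s<t\le b}|h(t)-h(s)|$. The Riemann–Stieltjes integral $\int_a^b f\,\mathrm{d}g$ exists if the sums $\sum_i f(\nu_i)[g(a_i)-g(a_{i-1})]$ over partitions $a=a_0<\dots<a_l=b$ with tags $\nu_i\in[a_{i-1};a_i]$ converge to a common limit as the mesh tends to $0$, independently of the tags. *)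

theory Defs
  imports "HOL-Analysis.Analysis"
begin

definition rvar_sums :: "real \<Rightarrow> (real \<Rightarrow> real) \<Rightarrow> real \<Rightarrow> real \<Rightarrow> real set" where
  "rvar_sums r h a b =
     {(\<Sum>i<n. \<bar>h (t (Suc i)) - h (t i)\<bar> powr r) | t n.
        (\<forall>i\<le>n. a \<le> t i \<and> t i \<le> b) \<and> (\<forall>i<n. t i < t (Suc i))}"

definition finite_rvar :: "real \<Rightarrow> (real \<Rightarrow> real) \<Rightarrow> real \<Rightarrow> real \<Rightarrow> bool" where
  "finite_rvar r h a b \<longleftrightarrow> bdd_above (rvar_sums r h a b)"

definition rvar :: "real \<Rightarrow> (real \<Rightarrow> real) \<Rightarrow> real \<Rightarrow> real \<Rightarrow> real" where
  "rvar r h a b = Sup (rvar_sums r h a b)"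

definition rvar_norm :: "real \<Rightarrow> (real \<Rightarrow> real) \<Rightarrow> real \<Rightarrow> real \<Rightarrow> real" where
  "rvar_norm r h a b = rvar r h a b powr (1 / r)"

definition osc_norm :: "(real \<Rightarrow> real) \<Rightarrow> real \<Rightarrow> real \<Rightarrow> real" where
  "osc_norm h a b = Sup {\<bar>h t - h s\<bar> | s t. a \<le> s \<and> s \<le> t \<and> t \<le> b}"

definition tagged_partition :: "real \<Rightarrow> real \<Rightarrow> (nat \<Rightarrow> real) \<Rightarrow> (nat \<Rightarrow> real) \<Rightarrow> nat \<Rightarrow> bool" where
  "tagged_partition a b x \<nu> l \<longleftrightarrow> x 0 = a \<and> x l = b \<and>
     (\<forall>i<l. x i < x (Suc i) \<and> x i \<le> \<nu> i \<and> \<nu> i \<le> x (Suc i))"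

definition mesh_less :: "(nat \<Rightarrow> real) \<Rightarrow> nat \<Rightarrow> real \<Rightarrow> bool" where
  "mesh_less x l \<delta> \<longleftrightarrow> (\<forall>i<l. x (Suc i) - x i < \<delta>)"

definition RS_sum :: "(real \<Rightarrow> real) \<Rightarrow> (real \<Rightarrow> real) \<Rightarrow> (nat \<Rightarrow> real) \<Rightarrow> (nat \<Rightarrow> real) \<Rightarrow> nat \<Rightarrow> real" where
  "RS_sum f g x \<nu> l = (\<Sum>i<l. f (\<nu> i) * (g (x (Suc i)) - g (x i)))"

definition RS_has_integral :: "(real \<Rightarrow> real) \<Rightarrow> (real \<Rightarrow> real) \<Rightarrow> real \<Rightarrow> real \<Rightarrow> real \<Rightarrow> bool" where
  "RS_has_integral f g a b I \<longleftrightarrow>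
     (\<forall>\<epsilon>>0. \<exists>\<delta>>0. \<forall>x \<nu> l. tagged_partition a b x \<nu> l \<and> mesh_less x l \<delta> \<longrightarrow>
        \<bar>RS_sum f g x \<nu> l - I\<bar> < \<epsilon>)"

end

theory Submission
  imports Defs
begin

text \<open>Young--Loeve argument. In a tagged partition with m + 1 cells one interior point can be
  deleted at the cost |f(nu_(k+1)) - f(nu_k)| * |g(x_(k+2)) - g(x_(k+1))|. Averaging the p- and
  q-variation sums over the m candidates shows that the cheapest cost is at most a constant times
  min (osc f * (V_q(g)/m)^(1/q)) (V_p(f)^(1/p) * V_q(g)^(1/q) * m^-(1/p+1/q)). Removing points one at
  a time down to a single cell and summing these bounds over m, a series that converges because
  1/p + 1/q > 1, estimates every Riemann--Stieltjes sum uniformly in the partition; interpolating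
  between the two terms of the minimum produces the exponents of the oscillation and the variation.

  For existence, the absence of common discontinuities gives by compactness a mesh below which on
  every cell f or g oscillates by at most eta. The estimate (or its mirror image with f and g
  exchanged) on each cell of a fine partition, compared with a common refinement and summed using
  the superadditivity of the variations, shows that the sums form a Cauchy net.\<close>

section \<open>Power sums\<close>

lemma powr_minus_le_diff_powr:
  fixes x s :: real
  assumes "0 < x" "0 < s" "s \<noteq> 1"
  shows "(x+1) powr (-s) \<le> ((x+1) powr (1-s) - x powr (1-s)) / (1-s)"
proof -
  have d: "\<And>t. x \<le> t \<Longrightarrow> t \<le> x+1 \<Longrightarrow> ((\<lambda>z. z powr (1-s)) has_real_derivative (1-s) * t powr (1-s-1)) (at t)"
    using assms by (intro has_real_derivative_powr) auto
  obtain z where z: "x < z" "z < x+1" "(x+1) powr (1-s) - x powr (1-s) = ((x+1) - x) * ((1-s) * z powr (1-s-1))"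
    using MVT2[of x "x+1" "\<lambda>z. z powr (1-s)" "\<lambda>t. (1-s) * t powr (1-s-1)", OF _ d] by auto
  have "((x+1) powr (1-s) - x powr (1-s)) / (1-s) = z powr (-s)"
    using z(3) assms by (simp add: field_simps)
  moreover have "(x+1) powr (-s) \<le> z powr (-s)"
    using z assms by (intro powr_mono2') auto
  ultimately show ?thesis by simp
qed

lemma sum_powr_minus_le:
  fixes s :: real
  assumes "0 < s" "s < 1"
  shows "(\<Sum>m\<in>{1..N}. real m powr (-s)) \<le> real N powr (1-s) / (1-s)"
proof (induction N)
  case 0
  then show ?case by simp
next
  case (Suc N)
  show ?case
  proof (cases "N = 0")
    case True
    then show ?thesis using assms by (simp add: field_simps)
  next
    case False
    have "real (Suc N) powr (-s) \<le> (real (Suc N) powr (1-s) - real N powr (1-s)) / (1-s)"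
      using powr_minus_le_diff_powr[of "real N" s] False assms by (simp add: add.commute)
    then show ?thesis using Suc by (simp add: diff_divide_distrib)
  qed
qed

lemma sum_powr_minus_tail_le:
  fixes th :: real
  assumes th: "1 < th" and N: "1 \<le> N"
  shows "(\<Sum>m\<in>{N<..M}. real m powr (-th)) \<le> real N powr (1-th) / (th-1)"
proof -
  have telescope: "(\<Sum>m\<in>{N<..M}. real m powr (-th)) \<le> (real N powr (1-th) - real M powr (1-th)) / (th-1)"
    if "N \<le> M" for M
    using that
  proof (induction M rule: dec_induct)
    case base
    then show ?case by simp
  next
    case (step M)
    have "real (Suc M) powr (-th) \<le> (real (Suc M) powr (1-th) - real M powr (1-th)) / (1-th)"
      using powr_minus_le_diff_powr[of "real M" th] step N th by (simp add: add.commute)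
    also have "\<dots> = (real M powr (1-th) - real (Suc M) powr (1-th)) / (th-1)"
      by (metis minus_diff_eq minus_divide_divide)
    finally have "real (Suc M) powr (-th) \<le> (real M powr (1-th) - real (Suc M) powr (1-th)) / (th-1)" .
    moreover have "{N<..Suc M} = insert (Suc M) {N<..M}" using step by auto
    ultimately show ?case using step th by (simp add: field_simps)
  qed
  show ?thesis
  proof (cases "N \<le> M")
    case True
    have "(real N powr (1-th) - real M powr (1-th)) / (th-1) \<le> real N powr (1-th) / (th-1)"
      using th by (simp add: divide_right_mono)
    then show ?thesis using telescope[OF True] by linarith
  next
    case False
    then show ?thesis using th by simp
  qed
qed

lemma sum_powr_minus_le_const:
  fixes th :: real
  assumes "1 < th"
  shows "(\<Sum>m\<in>{1..M}. real m powr (-th)) \<le> th / (th-1)"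
proof (cases "M = 0")
  case True
  then show ?thesis using assms by simp
next
  case False
  then have "{1..M} = insert 1 {1<..M}" by auto
  then have "(\<Sum>m\<in>{1..M}. real m powr (-th)) = 1 + (\<Sum>m\<in>{1<..M}. real m powr (-th))" by simp
  also have "\<dots> \<le> 1 + 1 / (th - 1)" using sum_powr_minus_tail_le[OF assms, of 1 M] by simp
  also have "\<dots> = th / (th-1)" using assms by (simp add: field_simps)
  finally show ?thesis .
qed

lemma sum_min_powr_le_split:
  fixes s th c w A :: real
  assumes s: "0 < s" "s < 1" and th: "1 < th" and c: "0 \<le> c" and w: "0 \<le> w" and A: "0 \<le> A"
    and N: "1 \<le> N"
  shows "(\<Sum>m\<in>{1..M}. min (w * real m powr (-s)) (c * A * real m powr (-th)))
     \<le> w * (real N powr (1-s) / (1-s)) + c * A * (real N powr (1-th) / (th-1))"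
proof -
  let ?F = "\<lambda>m::nat. min (w * real m powr (-s)) (c * A * real m powr (-th))"
  define M' where "M' = max M N"
  have "sum ?F {1..M} \<le> sum ?F {1..M'}"
    by (rule sum_mono2) (use c w A in \<open>auto simp: M'_def\<close>)
  also have "sum ?F {1..M'} = sum ?F {1..N} + sum ?F {N<..M'}"
  proof -
    have "{1..M'} = {1..N} \<union> {N<..M'}" by (auto simp: M'_def)
    then show ?thesis by (simp only:) (rule sum.union_disjoint, auto)
  qed
  also have "sum ?F {1..N} \<le> w * (\<Sum>m\<in>{1..N}. real m powr (-s))"
    by (simp add: sum_distrib_left sum_mono)
  also have "\<dots> \<le> w * (real N powr (1-s) / (1-s))"
    using sum_powr_minus_le[OF s, of N] w by (intro mult_left_mono)
  also have "sum ?F {N<..M'} \<le> c * A * (\<Sum>m\<in>{N<..M'}. real m powr (-th))"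
    by (simp add: sum_distrib_left sum_mono)
  also have "\<dots> \<le> c * A * (real N powr (1-th) / (th-1))"
    using sum_powr_minus_tail_le[OF th N, of M'] c A by (intro mult_left_mono) auto
  finally show ?thesis by simp
qed

lemma sum_min_powr_le_if_less:
  fixes s th c w A :: real
  assumes s: "0 < s" "s < 1" and th: "1 < th" and c: "0 \<le> c" and w: "0 < w" "w < A"
  shows "(\<Sum>m\<in>{1..M}. min (w * real m powr (-s)) (c * A * real m powr (-th)))
     \<le> (1/(1-s) + c * 2 powr (th-1) / (th-1)) * (w powr (1 - (1-s)/(th-s)) * A powr ((1-s)/(th-s)))"
proof -
  define al where "al = (1-s)/(th-s)"
  \<comment> \<open>\<open>m0\<close> is where \<open>w * m powr (-s)\<close> and \<open>A * m powr (-th)\<close> cross.\<close>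
  define m0 where "m0 = (A/w) powr (1/(th-s))"
  have m0: "1 < m0" unfolding m0_def using w s th by (intro gr_one_powr) auto
  define N where "N = nat (floor m0)"
  have N1: "1 \<le> N" and Nle: "real N \<le> m0" and "m0 < real N + 1"
    using m0 by (auto simp: N_def le_nat_iff)
  then have Nge: "m0 / 2 \<le> real N" by linarith
  have "(\<Sum>m\<in>{1..M}. min (w * real m powr (-s)) (c * A * real m powr (-th)))
      \<le> w * (real N powr (1-s) / (1-s)) + c * A * (real N powr (1-th) / (th-1))"
    using sum_min_powr_le_split[OF s th c _ _ N1] w by simp
  also have "\<dots> \<le> w * (m0 powr (1-s) / (1-s)) + c * A * ((m0/2) powr (1-th) / (th-1))"
    using Nle Nge s th c w m0
    by (intro add_mono mult_left_mono divide_right_mono powr_mono2 powr_mono2') auto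
  also have "\<dots> = 1/(1-s) * (w * m0 powr (1-s)) + c * 2 powr (th-1) / (th-1) * (A * m0 powr (1-th))"
  proof -
    have "(m0/2) powr (1-th) = m0 powr (1-th) / 2 powr (1-th)" using m0 by (simp add: powr_divide)
    also have "\<dots> = 2 powr (th-1) * m0 powr (1-th)" using powr_minus[of 2 "1-th"] by (simp add: divide_inverse mult.commute)
    finally show ?thesis by simp
  qed
  also have "w * m0 powr (1-s) = w powr (1-al) * A powr al"
    using w unfolding m0_def by (simp add: powr_powr al_def powr_divide powr_diff[of w 1] less_imp_le)
  also have "A * m0 powr (1-th) = w powr (1-al) * A powr al"
  proof -
    have "1/(th-s)*(1-th) = al - 1" unfolding al_def using s th by (simp add: field_simps)
    then have "m0 powr (1-th) = A powr (al - 1) / w powr (al - 1)"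
      using w unfolding m0_def by (simp add: powr_powr powr_divide less_imp_le)
    then show ?thesis using w by (simp add: powr_diff powr_minus_divide divide_inverse)
  qed
  finally show ?thesis by (simp add: al_def distrib_right)
qed

lemma sum_min_powr_le:
  fixes s th c w A :: real
  assumes s: "0 < s" "s < 1" and th: "1 < th" and c: "0 \<le> c" and w: "0 \<le> w" and A: "0 \<le> A"
  shows "(\<Sum>m\<in>{1..M}. min (w * real m powr (-s)) (c * A * real m powr (-th)))
     \<le> (1/(1-s) + c * 2 powr (th-1) * th/(th-1)) * w powr (1 - (1-s)/(th-s)) * A powr ((1-s)/(th-s))"
proof -
  define al where "al = (1-s)/(th-s)"
  define K where "K = 1/(1-s) + c * 2 powr (th-1) * th/(th-1)"
  let ?F = "\<lambda>m::nat. min (w * real m powr (-s)) (c * A * real m powr (-th))"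
  have al: "0 < al" "al < 1" using s th by (auto simp: al_def field_simps)
  have "c * 1 * th \<le> c * 2 powr (th-1) * th" and "c * 2 powr (th-1) * 1 \<le> c * 2 powr (th-1) * th"
    using c th ge_one_powr_ge_zero[of 2 "th-1"] by (intro mult_right_mono mult_left_mono; simp)+
  then have K: "c * th/(th-1) \<le> K" "1/(1-s) + c * 2 powr (th-1) / (th-1) \<le> K"
    using s th by (simp_all add: K_def divide_right_mono add_increasing)
  have "0 \<le> c * th/(th-1)" using c th by simp
  with K(1) have K0: "0 \<le> K" by linarith
  consider "A \<le> w" | "w = 0" "0 < A" | "0 < w" "w < A" using w A by linarith
  then have "sum ?F {1..M} \<le> K * (w powr (1-al) * A powr al)"
  proof cases
    case 1
    have "sum ?F {1..M} \<le> c * A * (\<Sum>m\<in>{1..M}. real m powr (-th))"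
      by (simp add: sum_distrib_left sum_mono)
    also have "\<dots> \<le> c * A * (th/(th-1))"
      using sum_powr_minus_le_const[OF th, of M] c A by (intro mult_left_mono) auto
    also have "\<dots> = (c * th/(th-1)) * A" by simp
    also have "\<dots> \<le> K * A" by (rule mult_right_mono[OF K(1) A])
    also have "K * A \<le> K * (A powr al * w powr (1-al))"
    proof -
      have "A = A powr al * A powr (1-al)" using A by (simp add: powr_add[symmetric])
      also have "\<dots> \<le> A powr al * w powr (1-al)" using 1 A al by (intro mult_left_mono powr_mono2) auto
      finally show ?thesis using K0 by (rule mult_left_mono)
    qed
    finally show ?thesis by (simp add: mult_ac)
  next
    case 2
    have "sum ?F {1..M} \<le> (\<Sum>m\<in>{1..M}. w * real m powr (-s))" by (rule sum_mono) simp
    then show ?thesis using 2 al by simp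
  next
    case 3
    have "sum ?F {1..M} \<le> (1/(1-s) + c * 2 powr (th-1) / (th-1)) * (w powr (1-al) * A powr al)"
      using sum_min_powr_le_if_less[OF s th c 3] unfolding al_def .
    also have "\<dots> \<le> K * (w powr (1-al) * A powr al)" by (rule mult_right_mono[OF K(2)]) simp
    finally show ?thesis .
  qed
  then show ?thesis by (simp add: K_def al_def mult_ac)
qed

section \<open>Variation sums\<close>

lemma nondecr_points_strictify:
  fixes t :: "nat \<Rightarrow> real" and h :: "real \<Rightarrow> real"
  assumes rng: "\<forall>i\<le>m. u \<le> t i \<and> t i \<le> v" and mono: "\<forall>i<m. t i \<le> t (Suc i)"
  shows "\<exists>t' m'. (\<forall>i\<le>m'. u \<le> t' i \<and> t' i \<le> v) \<and> (\<forall>i<m'. t' i < t' (Suc i)) \<and> t' m' = t m \<and>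
     (\<Sum>i<m'. \<bar>h (t' (Suc i)) - h (t' i)\<bar> powr r) = (\<Sum>i<m. \<bar>h (t (Suc i)) - h (t i)\<bar> powr r)"
  using rng mono
proof (induction m)
  case 0
  show ?case by (rule exI[of _ t], rule exI[of _ 0]) (use 0 in auto)
next
  case (Suc m)
  from Suc.prems have "\<forall>i\<le>m. u \<le> t i \<and> t i \<le> v" "\<forall>i<m. t i \<le> t (Suc i)" by auto
  from Suc.IH[OF this] obtain t' m' where
    t': "\<forall>i\<le>m'. u \<le> t' i \<and> t' i \<le> v" "\<forall>i<m'. t' i < t' (Suc i)" "t' m' = t m"
      "(\<Sum>i<m'. \<bar>h (t' (Suc i)) - h (t' i)\<bar> powr r) = (\<Sum>i<m. \<bar>h (t (Suc i)) - h (t i)\<bar> powr r)"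
    by blast
  have le: "t m \<le> t (Suc m)" using Suc.prems by auto
  show ?case
  proof (cases "t m = t (Suc m)")
    case True
    then show ?thesis using t' by (intro exI[of _ t'] exI[of _ m']) auto
  next
    case False
    with le have lt: "t m < t (Suc m)" by simp
    define t'' where "t'' = t'(Suc m' := t (Suc m))"
    have s: "(\<Sum>i<m'. \<bar>h (t'' (Suc i)) - h (t'' i)\<bar> powr r) = (\<Sum>i<m'. \<bar>h (t' (Suc i)) - h (t' i)\<bar> powr r)"
      by (rule sum.cong) (auto simp: t''_def)
    show ?thesis
    proof (intro exI[of _ t''] exI[of _ "Suc m'"] conjI)
      show "\<forall>i\<le>Suc m'. u \<le> t'' i \<and> t'' i \<le> v" using t'(1) Suc.prems(1) by (auto simp: t''_def le_Suc_eq)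
      show "\<forall>i<Suc m'. t'' i < t'' (Suc i)" using t'(2,3) lt by (auto simp: t''_def less_Suc_eq)
      show "t'' (Suc m') = t (Suc m)" by (simp add: t''_def)
      show "(\<Sum>i<Suc m'. \<bar>h (t'' (Suc i)) - h (t'' i)\<bar> powr r) = (\<Sum>i<Suc m. \<bar>h (t (Suc i)) - h (t i)\<bar> powr r)"
        using s t'(3,4) by (simp add: t''_def)
    qed
  qed
qed

lemma rvar_sums_nondecr:
  fixes t :: "nat \<Rightarrow> real" and h :: "real \<Rightarrow> real"
  assumes "\<forall>i\<le>m. u \<le> t i \<and> t i \<le> v" "\<forall>i<m. t i \<le> t (Suc i)"
  shows "(\<Sum>i<m. \<bar>h (t (Suc i)) - h (t i)\<bar> powr r) \<in> rvar_sums r h u v"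
proof -
  obtain t' m' where "(\<forall>i\<le>m'. u \<le> t' i \<and> t' i \<le> v) \<and> (\<forall>i<m'. t' i < t' (Suc i))"
     "(\<Sum>i<m'. \<bar>h (t' (Suc i)) - h (t' i)\<bar> powr r) = (\<Sum>i<m. \<bar>h (t (Suc i)) - h (t i)\<bar> powr r)"
    using nondecr_points_strictify[OF assms, of h r] by blast
  then show ?thesis unfolding rvar_sums_def by (intro CollectI exI[of _ t'] exI[of _ m']) simp
qed

lemma zero_in_rvar_sums: "u \<le> v \<Longrightarrow> 0 \<in> rvar_sums r h u v"
  unfolding rvar_sums_def by (rule CollectI, rule exI[of _ "\<lambda>_. u"], rule exI[of _ 0]) auto

lemma jump_in_rvar_sums:
  assumes "u \<le> s" "s < t" "t \<le> v"
  shows "\<bar>h t - h s\<bar> powr r \<in> rvar_sums r h u v"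
  unfolding rvar_sums_def
  by (rule CollectI, rule exI[of _ "\<lambda>i. if i = 0 then s else t"], rule exI[of _ 1]) (use assms in \<open>auto simp: le_Suc_eq\<close>)

lemma rvar_sums_subinterval:
  assumes "a \<le> u" "v \<le> b"
  shows "rvar_sums r h u v \<subseteq> rvar_sums r h a b"
proof
  fix z assume "z \<in> rvar_sums r h u v"
  then obtain t n where "z = (\<Sum>i<n. \<bar>h (t (Suc i)) - h (t i)\<bar> powr r)"
      "\<forall>i\<le>n. u \<le> t i \<and> t i \<le> v" "\<forall>i<n. t i < t (Suc i)"
    unfolding rvar_sums_def by blast
  then show "z \<in> rvar_sums r h a b" unfolding rvar_sums_def
    by (intro CollectI exI[of _ t] exI[of _ n]) (use assms in force)
qed

lemma finite_rvar_subinterval: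
  assumes "finite_rvar r h a b" "a \<le> u" "v \<le> b"
  shows "finite_rvar r h u v"
  using assms rvar_sums_subinterval[OF assms(2,3)] unfolding finite_rvar_def by (meson bdd_above_mono)

lemma rvar_sums_le_rvar:
  assumes "finite_rvar r h u v" "s \<in> rvar_sums r h u v"
  shows "s \<le> rvar r h u v"
  using assms unfolding finite_rvar_def rvar_def by (simp add: cSup_upper)

lemma rvar_nonneg:
  assumes "finite_rvar r h u v" "u \<le> v"
  shows "0 \<le> rvar r h u v"
  using rvar_sums_le_rvar[OF assms(1) zero_in_rvar_sums[OF assms(2)]] .

lemma le_powr_inverse_if_powr_le:
  fixes a c r :: real
  assumes "0 \<le> a" "0 < r" "a powr r \<le> c"
  shows "a \<le> c powr (1/r)"
proof -
  have "a = (a powr r) powr (1/r)" using assms by (simp add: powr_powr)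
  also have "\<dots> \<le> c powr (1/r)" using assms by (intro powr_mono2) auto
  finally show ?thesis .
qed

lemma abs_diff_le_if_rvar_sums_bounded:
  fixes h :: "real \<Rightarrow> real"
  assumes r: "0 < r" and V: "\<forall>z\<in>rvar_sums r h u v. z \<le> V"
    and st: "s \<in> {u..v}" "t \<in> {u..v}"
  shows "\<bar>h t - h s\<bar> \<le> V powr (1/r)"
proof -
  have jump: "\<bar>h y - h x\<bar> \<le> V powr (1/r)" if "x \<in> {u..v}" "y \<in> {u..v}" "x < y" for x y
    using that r V jump_in_rvar_sums[of u x y v h r] by (intro le_powr_inverse_if_powr_le) auto
  show ?thesis
  proof (cases s t rule: linorder_cases)
    case greater
    then show ?thesis using jump[of t s] st by (simp add: abs_minus_commute)
  qed (use jump st in auto)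
qed

lemma concat_points_nondecr:
  fixes t t' :: "nat \<Rightarrow> real"
  assumes t: "\<forall>i\<le>n. u \<le> t i \<and> t i \<le> v" "\<forall>i<n. t i \<le> t (Suc i)"
    and t': "\<forall>i\<le>n'. v \<le> t' i \<and> t' i \<le> w" "\<forall>i<n'. t' i \<le> t' (Suc i)"
  defines "T \<equiv> \<lambda>i. if i \<le> n then t i else t' (i - Suc n)"
  shows "\<forall>i\<le>n + Suc n'. u \<le> T i \<and> T i \<le> w" "\<forall>i<n + Suc n'. T i \<le> T (Suc i)"
proof -
  show "\<forall>i\<le>n + Suc n'. u \<le> T i \<and> T i \<le> w"
  proof (intro allI impI)
    fix i assume i: "i \<le> n + Suc n'"
    show "u \<le> T i \<and> T i \<le> w"
    proof (cases "i \<le> n")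
      case True then show ?thesis using t(1) t'(1) by (fastforce simp: T_def)
    next
      case False
      then have "i - Suc n \<le> n'" using i by simp
      then show ?thesis using t'(1) t(1) False by (fastforce simp: T_def)
    qed
  qed
  show "\<forall>i<n + Suc n'. T i \<le> T (Suc i)"
  proof (intro allI impI)
    fix i assume i: "i < n + Suc n'"
    consider "i < n" | "i = n" | "n < i" by linarith
    then show "T i \<le> T (Suc i)"
      proof cases
      case 1 then show ?thesis using t(2) by (simp add: T_def)
    next
      case 2
      have "t n \<le> v" "v \<le> t' 0" using t(1) t'(1) by auto
      then show ?thesis using 2 by (simp add: T_def)
    next
      case 3
      then have "i - Suc n < n'" "Suc i - Suc n = Suc (i - Suc n)" using i by auto
      then show ?thesis using t'(2) 3 by (simp add: T_def)
    qed
  qed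
qed

lemma rvar_sums_concat:
  assumes x: "x \<in> rvar_sums r h u v" and y: "y \<in> rvar_sums r h v w"
  shows "\<exists>z\<in>rvar_sums r h u w. x + y \<le> z"
proof -
  obtain t n where tn: "x = (\<Sum>i<n. \<bar>h (t (Suc i)) - h (t i)\<bar> powr r)"
    "\<forall>i\<le>n. u \<le> t i \<and> t i \<le> v" "\<forall>i<n. t i < t (Suc i)"
    using x unfolding rvar_sums_def by blast
  obtain t' n' where tn': "y = (\<Sum>i<n'. \<bar>h (t' (Suc i)) - h (t' i)\<bar> powr r)"
    "\<forall>i\<le>n'. v \<le> t' i \<and> t' i \<le> w" "\<forall>i<n'. t' i < t' (Suc i)"
    using y unfolding rvar_sums_def by blast
  define T where "T i = (if i \<le> n then t i else t' (i - Suc n))" for i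
  let ?phi = "\<lambda>T i. \<bar>h (T (Suc i)) - h (T i)\<bar> powr r"
  have sum_T: "(\<Sum>i<n + Suc k. ?phi T i) = x + ?phi T n + (\<Sum>i<k. ?phi t' i)" for k
  proof (induction k)
    case 0
    have "(\<Sum>i<n. ?phi T i) = (\<Sum>i<n. ?phi t i)" by (rule sum.cong) (auto simp: T_def)
    then show ?case using tn(1) by simp
  next
    case (Suc k)
    have "?phi T (n + Suc k) = ?phi t' k" by (simp add: T_def)
    then show ?case using Suc by simp
  qed
  have "(\<Sum>i<n + Suc n'. ?phi T i) \<in> rvar_sums r h u w"
    using concat_points_nondecr[of n u t v n' t' w] tn(2,3) tn'(2,3)
    by (intro rvar_sums_nondecr) (simp_all add: T_def less_imp_le)
  then have "x + ?phi T n + y \<in> rvar_sums r h u w" using sum_T[of n'] tn'(1) by simp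
  moreover have "0 \<le> ?phi T n" by simp
  ultimately show ?thesis by (intro bexI[of _ "x + ?phi T n + y"]) auto
qed

lemma rvar_superadditive:
  assumes fin: "finite_rvar r h u w" and uv: "u \<le> v" and vw: "v \<le> w"
  shows "rvar r h u v + rvar r h v w \<le> rvar r h u w"
proof -
  have ne: "rvar_sums r h u v \<noteq> {}" "rvar_sums r h v w \<noteq> {}"
    using zero_in_rvar_sums[OF uv] zero_in_rvar_sums[OF vw] by blast+
  have "rvar r h u v \<le> rvar r h u w - rvar r h v w"
    unfolding rvar_def
  proof (rule cSup_least[OF ne(1)])
    fix x assume x: "x \<in> rvar_sums r h u v"
    have "Sup (rvar_sums r h v w) \<le> rvar r h u w - x"
    proof (rule cSup_least[OF ne(2)])
      fix y assume "y \<in> rvar_sums r h v w"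
      then obtain z where "z \<in> rvar_sums r h u w" "x + y \<le> z" using rvar_sums_concat[OF x] by blast
      then show "y \<le> rvar r h u w - x" using rvar_sums_le_rvar[OF fin] by fastforce
    qed
    then show "x \<le> Sup (rvar_sums r h u w) - Sup (rvar_sums r h v w)" unfolding rvar_def by linarith
  qed
  then show ?thesis by linarith
qed

lemma sum_rvar_le_rvar:
  fixes x :: "nat \<Rightarrow> real"
  assumes fin: "finite_rvar r h a b"
    and rng: "\<forall>i\<le>n. a \<le> x i \<and> x i \<le> b" and mono: "\<forall>i<n. x i \<le> x (Suc i)"
  shows "(\<Sum>i<n. rvar r h (x i) (x (Suc i))) \<le> rvar r h (x 0) (x n)"
  using rng mono
proof (induction n)
  case 0
  then show ?case using rvar_nonneg[OF finite_rvar_subinterval[OF fin]] by auto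
next
  case (Suc n)
  have "x 0 \<le> x n" by (rule lift_Suc_mono_le_ivl[of "{..<Suc n}"]) (use Suc.prems in auto)
  then have "rvar r h (x 0) (x n) + rvar r h (x n) (x (Suc n)) \<le> rvar r h (x 0) (x (Suc n))"
    using Suc.prems by (intro rvar_superadditive finite_rvar_subinterval[OF fin]) auto
  then show ?case using Suc by simp
qed

section \<open>The Young--Loeve estimate\<close>

lemma tagged_partition_in_interval:
  assumes "tagged_partition u v x nu N"
  shows "\<forall>i\<le>N. u \<le> x i \<and> x i \<le> v" "\<forall>i<N. u \<le> nu i \<and> nu i \<le> v" "u \<le> v"
proof -
  have x0: "x 0 = u" and xN: "x N = v" and tags: "\<forall>i<N. x i \<le> nu i \<and> nu i \<le> x (Suc i)"
    and mono: "\<And>i. i \<in> {..<N} \<Longrightarrow> x i \<le> x (Suc i)"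
    using assms unfolding tagged_partition_def by (auto simp: less_imp_le)
  show points: "\<forall>i\<le>N. u \<le> x i \<and> x i \<le> v"
  proof (intro allI impI)
    fix i assume "i \<le> N"
    have "x i \<le> x j" if "i \<le> j" "j \<le> N" for i j
      by (rule lift_Suc_mono_le_ivl[of "{..<N}"]) (use mono that in auto)
    then show "u \<le> x i \<and> x i \<le> v" using \<open>i \<le> N\<close> x0 xN by auto
  qed
  show "\<forall>i<N. u \<le> nu i \<and> nu i \<le> v"
  proof (intro allI impI)
    fix i assume "i < N"
    then have "u \<le> x i" "x (Suc i) \<le> v" "x i \<le> nu i" "nu i \<le> x (Suc i)" using points tags by auto
    then show "u \<le> nu i \<and> nu i \<le> v" by linarith
  qed
  show "u \<le> v" using points x0 by auto
qed

lemma sum_remove_one_point: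
  fixes phi psi :: "nat \<Rightarrow> real"
  assumes "k \<le> n" "\<forall>i<k. psi i = phi i" "\<forall>i. k < i \<longrightarrow> i \<le> n \<longrightarrow> psi i = phi (Suc i)"
  shows "(\<Sum>i<Suc (Suc n). phi i) = (\<Sum>i<Suc n. psi i) + (phi k + phi (Suc k) - psi k)"
  using assms
proof (induction n rule: dec_induct)
  case base
  have "(\<Sum>i<k. psi i) = (\<Sum>i<k. phi i)" using base by simp
  then show ?case by simp
next
  case (step n)
  have "psi (Suc n) = phi (Suc (Suc n))" using step by simp
  then show ?case using step by simp
qed

lemma ex_le_average:
  fixes phi :: "'a \<Rightarrow> real"
  assumes "finite K" "K \<noteq> {}" "(\<Sum>i\<in>K. phi i) \<le> S"
  shows "\<exists>j\<in>K. phi j \<le> S / card K"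
proof (rule ccontr)
  assume "\<not> ?thesis"
  then have "(\<Sum>j\<in>K. S / card K) < (\<Sum>j\<in>K. phi j)" using assms by (intro sum_strict_mono) auto
  moreover have "(\<Sum>j\<in>K. S / card K) = S" using assms by simp
  ultimately show False using assms by linarith
qed

lemma ex_le_root_average:
  fixes a :: "'a \<Rightarrow> real"
  assumes "finite K" "K \<noteq> {}" "0 < p" "\<forall>i. 0 \<le> a i" "(\<Sum>i\<in>K. a i powr p) \<le> V"
  shows "\<exists>j\<in>K. a j \<le> (V / card K) powr (1/p)"
  using ex_le_average[OF assms(1,2,5)] assms(3,4) le_powr_inverse_if_powr_le by blast

text \<open>Three bounds for the smallest of the products \<open>a i * b i\<close>, \<open>i < m\<close>, where \<open>a\<close> and \<open>b\<close>
  are increments of \<open>f\<close> and \<open>g\<close> with \<open>p\<close>- and \<open>q\<close>-variation sums at most \<open>Vf\<close>, \<open>Vg\<close> and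
  oscillations at most \<open>ef\<close>, \<open>eg\<close>.\<close>
definition loeve_bound :: "real \<Rightarrow> real \<Rightarrow> real \<Rightarrow> real \<Rightarrow> real \<Rightarrow> real \<Rightarrow> real \<Rightarrow> real" where
  "loeve_bound p q Vf Vg ef eg m = min (ef * (Vg / m) powr (1/q))
     (min (eg * (Vf / m) powr (1/p)) ((2 * Vf / m) powr (1/p) * (2 * Vg / m) powr (1/q)))"

lemma loeve_bound_swap: "loeve_bound q p Vg Vf eg ef m = loeve_bound p q Vf Vg ef eg m"
  unfolding loeve_bound_def by (simp add: min.left_commute min.commute mult.commute)

lemma ex_product_le_two_vars:
  fixes a b :: "nat \<Rightarrow> real"
  assumes p: "0 < p" and q: "0 < q" and a: "\<forall>i. 0 \<le> a i" and b: "\<forall>i. 0 \<le> b i"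
    and Vf: "(\<Sum>i<m. a i powr p) \<le> Vf" and Vg: "(\<Sum>i<m. b i powr q) \<le> Vg" and m: "0 < m"
  shows "\<exists>j<m. a j * b j \<le> (2 * Vf / m) powr (1/p) * (2 * Vg / m) powr (1/q)"
proof (cases "Vf = 0 \<or> Vg = 0")
  case True
  have "a 0 powr p \<le> (\<Sum>i<m. a i powr p)" "b 0 powr q \<le> (\<Sum>i<m. b i powr q)"
    using m by (auto intro!: member_le_sum)
  then have "a 0 powr p \<le> Vf" "b 0 powr q \<le> Vg" using Vf Vg by linarith+
  with True have "a 0 powr p \<le> 0 \<or> b 0 powr q \<le> 0" by auto
  then have "a 0 = 0 \<or> b 0 = 0" by (metis powr_ge_zero antisym powr_eq_0_iff)
  then show ?thesis using m by (intro exI[of _ 0]) auto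
next
  case False
  have "0 \<le> (\<Sum>i<m. a i powr p)" "0 \<le> (\<Sum>i<m. b i powr q)" by (simp_all add: sum_nonneg)
  with False Vf Vg have V: "0 < Vf" "0 < Vg" by linarith+
  \<comment> \<open>Average the normalized sum \<open>a i powr p / Vf + b i powr q / Vg\<close>, whose total is at most 2.\<close>
  have "(\<Sum>i<m. a i powr p / Vf + b i powr q / Vg) = (\<Sum>i<m. a i powr p) / Vf + (\<Sum>i<m. b i powr q) / Vg"
    by (simp add: sum.distrib sum_divide_distrib)
  also have "\<dots> \<le> 1 + 1" using Vf Vg V by (intro add_mono) auto
  finally obtain j where j: "j < m" "a j powr p / Vf + b j powr q / Vg \<le> 2 / m"
    using ex_le_average[of "{..<m}"] m by fastforce
  moreover have "0 \<le> a j powr p / Vf" "0 \<le> b j powr q / Vg" using V by simp_all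
  ultimately have "a j powr p / Vf \<le> 2 / m" "b j powr q / Vg \<le> 2 / m" by linarith+
  then have "a j powr p \<le> 2 * Vf / m" "b j powr q \<le> 2 * Vg / m" using V by (simp_all add: field_simps)
  then have "a j \<le> (2 * Vf / m) powr (1/p)" "b j \<le> (2 * Vg / m) powr (1/q)"
    using a b p q le_powr_inverse_if_powr_le by blast+
  then show ?thesis using a b j(1) by (intro exI[of _ j]) (auto intro: mult_mono)
qed

lemma ex_product_le_loeve_bound:
  fixes a b :: "nat \<Rightarrow> real"
  assumes p: "0 < p" and q: "0 < q"
    and a: "\<forall>i. 0 \<le> a i" and b: "\<forall>i. 0 \<le> b i"
    and Vf: "(\<Sum>i<m. a i powr p) \<le> Vf" and Vg: "(\<Sum>i<m. b i powr q) \<le> Vg"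
    and ef: "\<forall>i<m. a i \<le> ef" and eg: "\<forall>i<m. b i \<le> eg" and m: "0 < m"
  shows "\<exists>k<m. a k * b k \<le> loeve_bound p q Vf Vg ef eg (real m)"
proof -
  have K: "finite {..<m}" "{..<m} \<noteq> {}" "card {..<m} = m" using m by auto
  obtain k where k: "k < m" "\<forall>j<m. a k * b k \<le> a j * b j"
  proof -
    have "Min ((\<lambda>j. a j * b j) ` {..<m}) \<in> (\<lambda>j. a j * b j) ` {..<m}" using K by (intro Min_in) auto
    then obtain k where "k < m" "a k * b k = Min ((\<lambda>j. a j * b j) ` {..<m})" by auto
    then show ?thesis using that K by auto
  qed
  have below: "a k * b k \<le> B" if "\<exists>j<m. a j * b j \<le> B" for B
    using that k(2) by force
  have "\<exists>j<m. a j * b j \<le> ef * (Vg / m) powr (1/q)"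
  proof -
    obtain j where j: "j < m" "b j \<le> (Vg / m) powr (1/q)" using ex_le_root_average[OF K(1,2) q b Vg] K by auto
    have "a j \<le> ef" "0 \<le> a j" "0 \<le> b j" using j(1) ef a b by auto
    then have "a j * b j \<le> ef * (Vg / m) powr (1/q)" using j(2) by (intro mult_mono) auto
    then show ?thesis using j(1) by blast
  qed
  moreover have "\<exists>j<m. a j * b j \<le> eg * (Vf / m) powr (1/p)"
  proof -
    obtain j where j: "j < m" "a j \<le> (Vf / m) powr (1/p)" using ex_le_root_average[OF K(1,2) p a Vf] K by auto
    have "b j \<le> eg" "0 \<le> a j" "0 \<le> b j" using j(1) eg a b by auto
    then have "a j * b j \<le> (Vf / m) powr (1/p) * eg" using j(2) by (intro mult_mono) auto
    then show ?thesis using j(1) by (auto simp: mult.commute)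
  qed
  ultimately show ?thesis
    using k(1) below ex_product_le_two_vars[OF p q a b Vf Vg m] unfolding loeve_bound_def by auto
qed

definition omit_index :: "nat \<Rightarrow> (nat \<Rightarrow> 'a) \<Rightarrow> nat \<Rightarrow> 'a" where
  "omit_index j x i = (if i < j then x i else x (Suc i))"

lemma tagged_partition_omit_point:
  assumes tp: "tagged_partition u v x nu (Suc (Suc n))" and k: "k < Suc n"
  shows "tagged_partition u v (omit_index (Suc k) x) (omit_index (Suc k) nu) (Suc n)"
  unfolding tagged_partition_def
proof (intro conjI allI impI)
  have strict: "\<forall>i<Suc (Suc n). x i < x (Suc i)"
    and tags: "\<forall>i<Suc (Suc n). x i \<le> nu i \<and> nu i \<le> x (Suc i)"
    using tp unfolding tagged_partition_def by auto
  show "omit_index (Suc k) x 0 = u" "omit_index (Suc k) x (Suc n) = v"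
    using tp k unfolding tagged_partition_def omit_index_def by auto
  fix i assume i: "i < Suc n"
  consider "i < k" | "i = k" | "k < i" by linarith
  note cases = this
  show "omit_index (Suc k) x i < omit_index (Suc k) x (Suc i)"
  proof (cases rule: cases)
    case 2
    have "x k < x (Suc k)" "x (Suc k) < x (Suc (Suc k))" using strict i 2 by auto
    then show ?thesis using 2 by (simp add: omit_index_def)
  qed (use strict i in \<open>auto simp: omit_index_def\<close>)
  show "omit_index (Suc k) x i \<le> omit_index (Suc k) nu i"
    using cases tags i by cases (auto simp: omit_index_def)
  show "omit_index (Suc k) nu i \<le> omit_index (Suc k) x (Suc i)"
  proof (cases rule: cases)
    case 2
    have "nu k \<le> x (Suc k)" "x (Suc k) < x (Suc (Suc k))" using tags strict i 2 by auto
    then show ?thesis using 2 by (simp add: omit_index_def)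
  qed (use tags i in \<open>auto simp: omit_index_def\<close>)
qed

lemma RS_sum_omit_point:
  assumes k: "k < Suc n"
  shows "RS_sum f g x nu (Suc (Suc n))
    = RS_sum f g (omit_index (Suc k) x) (omit_index (Suc k) nu) (Suc n)
      + (f (nu (Suc k)) - f (nu k)) * (g (x (Suc (Suc k))) - g (x (Suc k)))"
proof -
  define phi where "phi i = f (nu i) * (g (x (Suc i)) - g (x i))" for i
  define psi where "psi i = f (omit_index (Suc k) nu i)
    * (g (omit_index (Suc k) x (Suc i)) - g (omit_index (Suc k) x i))" for i
  have "RS_sum f g x nu (Suc (Suc n))
      = RS_sum f g (omit_index (Suc k) x) (omit_index (Suc k) nu) (Suc n) + (phi k + phi (Suc k) - psi k)"
    unfolding RS_sum_def phi_def[symmetric] psi_def[symmetric]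
    by (rule sum_remove_one_point) (use k in \<open>auto simp: phi_def psi_def omit_index_def\<close>)
  also have "phi k + phi (Suc k) - psi k = (f (nu (Suc k)) - f (nu k)) * (g (x (Suc (Suc k))) - g (x (Suc k)))"
    unfolding phi_def psi_def omit_index_def by (simp add: algebra_simps)
  finally show ?thesis .
qed

lemma RS_sum_point_removal:
  fixes f g :: "real \<Rightarrow> real" and x nu :: "nat \<Rightarrow> real"
  assumes p: "0 < p" and q: "0 < q"
    and Vf: "\<forall>s\<in>rvar_sums p f u v. s \<le> Vf" and Vg: "\<forall>s\<in>rvar_sums q g u v. s \<le> Vg"
    and ef: "\<forall>s\<in>{u..v}. \<forall>t\<in>{u..v}. \<bar>f t - f s\<bar> \<le> ef"
    and eg: "\<forall>s\<in>{u..v}. \<forall>t\<in>{u..v}. \<bar>g t - g s\<bar> \<le> eg"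
    and tp: "tagged_partition u v x nu (Suc n)"
  shows "\<exists>c\<in>{u..v}. \<bar>RS_sum f g x nu (Suc n) - f c * (g v - g u)\<bar>
           \<le> (\<Sum>m\<in>{1..n}. loeve_bound p q Vf Vg ef eg (real m))"
  using tp
proof (induction n arbitrary: x nu)
  case 0
  then have "x 0 = u" "x (Suc 0) = v" "x 0 \<le> nu 0" "nu 0 \<le> x (Suc 0)"
    unfolding tagged_partition_def by auto
  then show ?case by (intro bexI[of _ "nu 0"]) (auto simp: RS_sum_def)
next
  case (Suc n)
  note tp = Suc.prems
  have strict: "\<forall>i<Suc (Suc n). x i < x (Suc i)"
    and tags: "\<forall>i<Suc (Suc n). x i \<le> nu i \<and> nu i \<le> x (Suc i)"
    using tp unfolding tagged_partition_def by auto
  note in_uv = tagged_partition_in_interval[OF tp]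
  define a where "a i = \<bar>f (nu (Suc i)) - f (nu i)\<bar>" for i
  define b where "b i = \<bar>g (x (Suc (Suc i))) - g (x (Suc i))\<bar>" for i
  have "(\<Sum>i<Suc n. a i powr p) \<in> rvar_sums p f u v"
    unfolding a_def using in_uv(2) tags
    by (intro rvar_sums_nondecr) (auto, meson Suc_mono less_SucI order_trans)
  then have sum_a: "(\<Sum>i<Suc n. a i powr p) \<le> Vf" using Vf by blast
  have "(\<Sum>i<Suc n. b i powr q) \<in> rvar_sums q g u v"
    unfolding rvar_sums_def b_def
    by (rule CollectI, rule exI[of _ "\<lambda>i. x (Suc i)"], rule exI[of _ "Suc n"]) (use in_uv(1) strict in auto)
  then have sum_b: "(\<Sum>i<Suc n. b i powr q) \<le> Vg" using Vg by blast
  have "\<forall>i<Suc n. a i \<le> ef" "\<forall>i<Suc n. b i \<le> eg" unfolding a_def b_def using ef eg in_uv by auto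
  moreover have "\<forall>i. 0 \<le> a i" "\<forall>i. 0 \<le> b i" by (simp_all add: a_def b_def)
  ultimately obtain k where k: "k < Suc n" "a k * b k \<le> loeve_bound p q Vf Vg ef eg (real (Suc n))"
    using ex_product_le_loeve_bound[OF p q _ _ sum_a sum_b] by blast
  obtain c where c: "c \<in> {u..v}" and near_c: "\<bar>RS_sum f g (omit_index (Suc k) x) (omit_index (Suc k) nu) (Suc n)
      - f c * (g v - g u)\<bar> \<le> (\<Sum>m\<in>{1..n}. loeve_bound p q Vf Vg ef eg (real m))"
    using Suc.IH[OF tagged_partition_omit_point[OF tp k(1)]] by blast
  have "\<bar>RS_sum f g x nu (Suc (Suc n)) - f c * (g v - g u)\<bar>
      \<le> (\<Sum>m\<in>{1..n}. loeve_bound p q Vf Vg ef eg (real m)) + a k * b k"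
    using near_c unfolding RS_sum_omit_point[OF k(1)] a_def b_def abs_mult[symmetric] by linarith
  then show ?case using c k(2) by (intro bexI[of _ c]) auto
qed

lemma loeve_bound_le:
  fixes m :: real
  assumes "0 < p" "0 < q" "0 \<le> Vf" "0 \<le> Vg" "0 < m"
  shows "loeve_bound p q Vf Vg ef eg m
    \<le> Vg powr (1/q) * min (ef * m powr (-(1/q))) (2 powr (1/p+1/q) * Vf powr (1/p) * m powr (-(1/p+1/q)))"
proof -
  have split: "(c * X / m) powr e = c powr e * X powr e * m powr (-e)" if "0 \<le> c" "0 \<le> X" for c X e :: real
  proof -
    have "(c * X / m) powr e = c powr e * X powr e / m powr e"
      using that assms(5) by (simp add: powr_divide powr_mult)
    then show ?thesis by (simp add: powr_minus divide_inverse)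
  qed
  have e1: "ef * (Vg / m) powr (1/q) = Vg powr (1/q) * (ef * m powr (-(1/q)))"
    using split[of 1 Vg] assms by simp
  have e2: "(2 * Vf / m) powr (1/p) * (2 * Vg / m) powr (1/q)
      = Vg powr (1/q) * (2 powr (1/p+1/q) * Vf powr (1/p) * m powr (-(1/p+1/q)))"
  proof -
    have "m powr (-(1/p+1/q)) = m powr (-(1/p)) * m powr (-(1/q))"
      by (simp add: powr_add[symmetric])
    then show ?thesis using assms by (simp add: split powr_add mult_ac)
  qed
  have "min (ef * (Vg / m) powr (1/q)) ((2 * Vf / m) powr (1/p) * (2 * Vg / m) powr (1/q))
      = Vg powr (1/q) * min (ef * m powr (-(1/q))) (2 powr (1/p+1/q) * Vf powr (1/p) * m powr (-(1/p+1/q)))"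
    unfolding e1 e2 by (simp add: min_mult_distrib_left)
  then show ?thesis unfolding loeve_bound_def by linarith
qed

text \<open>The constant of \<open>sum_min_powr_le\<close> for \<open>s = 1/q\<close>, \<open>th = 1/p + 1/q\<close> and \<open>c = 2 powr th\<close>.\<close>
definition young_loeve_const :: "real \<Rightarrow> real \<Rightarrow> real" where
  "young_loeve_const p q =
     1/(1-1/q) + 2 powr (1/p+1/q) * 2 powr (1/p+1/q-1) * (1/p+1/q)/(1/p+1/q-1)"

lemma young_loeve_const_nonneg:
  assumes "1 < q" "1 < 1/p + 1/q"
  shows "0 \<le> young_loeve_const p q"
  using assms unfolding young_loeve_const_def by (simp add: add_nonneg_nonneg)

lemma sum_loeve_bound_le:
  assumes p: "1 < p" and q: "1 < q" and th: "1 < 1/p + 1/q"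
    and Vf: "0 \<le> Vf" and Vg: "0 \<le> Vg" and ef: "0 \<le> ef"
  shows "(\<Sum>m\<in>{1..n}. loeve_bound p q Vf Vg ef eg (real m))
    \<le> young_loeve_const p q * ef powr (1 + p/q - p) * Vf powr (1 - 1/q) * Vg powr (1/q)"
proof -
  let ?A = "Vf powr (1/p)"
  have al: "(1 - 1/q) / ((1/p + 1/q) - 1/q) = p - p/q" using p by (simp add: field_simps)
  have "(\<Sum>m\<in>{1..n}. loeve_bound p q Vf Vg ef eg (real m))
      \<le> (\<Sum>m\<in>{1..n}. Vg powr (1/q) * min (ef * real m powr (-(1/q)))
            (2 powr (1/p+1/q) * ?A * real m powr (-(1/p+1/q))))"
    by (rule sum_mono, rule loeve_bound_le) (use p q Vf Vg in auto)
  also have "\<dots> = Vg powr (1/q) * (\<Sum>m\<in>{1..n}. min (ef * real m powr (-(1/q)))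
            (2 powr (1/p+1/q) * ?A * real m powr (-(1/p+1/q))))"
    by (simp add: sum_distrib_left)
  also have "\<dots> \<le> Vg powr (1/q) * (young_loeve_const p q * ef powr (1 - (p - p/q)) * ?A powr (p - p/q))"
    using sum_min_powr_le[of "1/q" "1/p+1/q" "2 powr (1/p+1/q)" ef ?A n] p q th ef
    unfolding young_loeve_const_def al by (intro mult_left_mono) auto
  also have "?A powr (p - p/q) = Vf powr (1 - 1/q)"
  proof -
    have "1/p * (p - p/q) = 1 - 1/q" using p by (simp add: field_simps)
    then show ?thesis by (simp only: powr_powr)
  qed
  finally show ?thesis by (simp add: mult_ac diff_diff_eq2)
qed

lemma min_le_powr_interpolation:
  fixes x y l :: real
  assumes "0 \<le> x" "0 \<le> y" "0 \<le> l" "l \<le> 1"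
  shows "min x y \<le> x powr l * y powr (1 - l)"
proof (cases "x \<le> y")
  case True
  have "x = x powr l * x powr (1-l)" using assms by (simp add: powr_add[symmetric])
  also have "\<dots> \<le> x powr l * y powr (1-l)"
    using assms True by (intro mult_left_mono powr_mono2) auto
  finally show ?thesis using True by simp
next
  case False
  have "y = y powr l * y powr (1-l)" using assms by (simp add: powr_add[symmetric])
  also have "\<dots> \<le> x powr l * y powr (1-l)"
    using assms False by (intro mult_right_mono powr_mono2) auto
  finally show ?thesis using False by simp
qed

lemma powr_interpolation_le_add:
  fixes x y l :: real
  assumes "0 \<le> x" "0 \<le> y" "0 \<le> l" "l \<le> 1"
  shows "x powr l * y powr (1 - l) \<le> x + y"
proof -
  have "x powr l * y powr (1 - l) \<le> (x+y) powr l * (x+y) powr (1-l)"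
    using assms by (intro mult_mono powr_mono2) auto
  also have "\<dots> = x + y" using assms by (simp add: powr_add[symmetric])
  finally show ?thesis .
qed

lemma min_le_osc_rvar_interpolation:
  fixes e V :: real
  assumes e: "0 \<le> e" and V: "0 \<le> V" and p: "1 < p" and q: "1 < q" and th: "1 < 1/p + 1/q"
  shows "min e (V powr (1/p)) \<le> e powr (1 + p/q - p) * V powr (1 - 1/q)"
proof -
  have "0 \<le> 1 + p/q - p" "1 + p/q - p \<le> 1"
    using p q th by (simp_all add: field_simps)
  then have "min e (V powr (1/p)) \<le> e powr (1 + p/q - p) * (V powr (1/p)) powr (1 - (1 + p/q - p))"
    using e by (intro min_le_powr_interpolation) auto
  also have "(V powr (1/p)) powr (1 - (1 + p/q - p)) = V powr (1 - 1/q)"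
  proof -
    have "1/p * (1 - (1 + p/q - p)) = 1 - 1/q" using p by (simp add: field_simps)
    then show ?thesis by (simp only: powr_powr)
  qed
  finally show ?thesis .
qed

lemma RS_sum_estimate_by_osc_f:
  fixes f g :: "real \<Rightarrow> real"
  assumes p: "1 < p" and q: "1 < q" and th: "1 < 1/p + 1/q"
    and Vf: "\<forall>s\<in>rvar_sums p f u v. s \<le> Vf" and Vg: "\<forall>s\<in>rvar_sums q g u v. s \<le> Vg"
    and ef: "\<forall>s\<in>{u..v}. \<forall>t\<in>{u..v}. \<bar>f t - f s\<bar> \<le> ef"
    and tp: "tagged_partition u v x nu n" and n: "0 < n" and c0: "c0 \<in> {u..v}"
  shows "\<bar>RS_sum f g x nu n - f c0 * (g v - g u)\<bar>
     \<le> (young_loeve_const p q + 1) * ef powr (1 + p/q - p) * Vf powr (1 - 1/q) * Vg powr (1/q)"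
proof -
  obtain n' where n': "n = Suc n'" using n by (cases n) auto
  have uv: "u \<le> v" using tagged_partition_in_interval(3)[OF tp] .
  have Vf0: "0 \<le> Vf" and Vg0: "0 \<le> Vg" using Vf Vg zero_in_rvar_sums[OF uv] by blast+
  have ef0: "0 \<le> ef" using ef[rule_format, of u u] uv by simp
  have osc_g: "\<forall>s\<in>{u..v}. \<forall>t\<in>{u..v}. \<bar>g t - g s\<bar> \<le> Vg powr (1/q)"
    using abs_diff_le_if_rvar_sums_bounded[OF _ Vg] q by auto
  define E where "E = ef powr (1 + p/q - p) * Vf powr (1 - 1/q) * Vg powr (1/q)"
  obtain c where c: "c \<in> {u..v}"
    and removal: "\<bar>RS_sum f g x nu n - f c * (g v - g u)\<bar> \<le> (\<Sum>m\<in>{1..n'}. loeve_bound p q Vf Vg ef (Vg powr (1/q)) (real m))"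
    using RS_sum_point_removal[OF _ _ Vf Vg ef osc_g tp[unfolded n']] p q n' by auto
  note removal
  also have "(\<Sum>m\<in>{1..n'}. loeve_bound p q Vf Vg ef (Vg powr (1/q)) (real m)) \<le> young_loeve_const p q * E"
    unfolding E_def using sum_loeve_bound_le[OF p q th Vf0 Vg0 ef0] by (simp add: mult.assoc)
  finally have near_c: "\<bar>RS_sum f g x nu n - f c * (g v - g u)\<bar> \<le> young_loeve_const p q * E" .
  have "\<bar>f c - f c0\<bar> \<le> min ef (Vf powr (1/p))"
    using ef abs_diff_le_if_rvar_sums_bounded[OF _ Vf] c(1) c0 p by auto
  also have "\<dots> \<le> ef powr (1 + p/q - p) * Vf powr (1 - 1/q)"
    by (rule min_le_osc_rvar_interpolation[OF ef0 Vf0 p q th])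
  finally have "\<bar>f c - f c0\<bar> * \<bar>g v - g u\<bar> \<le> E"
    unfolding E_def using osc_g uv by (intro mult_mono) auto
  then have "\<bar>(f c - f c0) * (g v - g u)\<bar> \<le> E" by (simp add: abs_mult)
  moreover have "RS_sum f g x nu n - f c0 * (g v - g u)
      = (RS_sum f g x nu n - f c * (g v - g u)) + (f c - f c0) * (g v - g u)"
    by (simp add: algebra_simps)
  ultimately have "\<bar>RS_sum f g x nu n - f c0 * (g v - g u)\<bar> \<le> young_loeve_const p q * E + E"
    using near_c abs_triangle_ineq[of "RS_sum f g x nu n - f c * (g v - g u)"] by linarith
  then show ?thesis by (simp add: E_def algebra_simps)
qed

lemma RS_sum_estimate_by_osc_g:
  fixes f g :: "real \<Rightarrow> real"
  assumes p: "1 < p" and q: "1 < q" and th: "1 < 1/p + 1/q"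
    and Vf: "\<forall>s\<in>rvar_sums p f u v. s \<le> Vf" and Vg: "\<forall>s\<in>rvar_sums q g u v. s \<le> Vg"
    and eg: "\<forall>s\<in>{u..v}. \<forall>t\<in>{u..v}. \<bar>g t - g s\<bar> \<le> eg"
    and tp: "tagged_partition u v x nu n" and n: "0 < n" and c0: "c0 \<in> {u..v}"
  shows "\<bar>RS_sum f g x nu n - f c0 * (g v - g u)\<bar>
     \<le> (young_loeve_const q p + 1) * eg powr (1 + q/p - q) * Vg powr (1 - 1/p) * Vf powr (1/p)"
proof -
  obtain n' where n': "n = Suc n'" using n by (cases n) auto
  have uv: "u \<le> v" using tagged_partition_in_interval(3)[OF tp] .
  have Vf0: "0 \<le> Vf" and Vg0: "0 \<le> Vg" using Vf Vg zero_in_rvar_sums[OF uv] by blast+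
  have eg0: "0 \<le> eg" using eg[rule_format, of u u] uv by simp
  have osc_f: "\<forall>s\<in>{u..v}. \<forall>t\<in>{u..v}. \<bar>f t - f s\<bar> \<le> Vf powr (1/p)"
    using abs_diff_le_if_rvar_sums_bounded[OF _ Vf] p by auto
  define E where "E = eg powr (1 + q/p - q) * Vg powr (1 - 1/p) * Vf powr (1/p)"
  obtain c where c: "c \<in> {u..v}"
    and removal: "\<bar>RS_sum f g x nu n - f c * (g v - g u)\<bar> \<le> (\<Sum>m\<in>{1..n'}. loeve_bound q p Vg Vf eg (Vf powr (1/p)) (real m))"
    using RS_sum_point_removal[OF _ _ Vf Vg osc_f eg tp[unfolded n']] p q n' by (auto simp: loeve_bound_swap)
  note removal
  also have "(\<Sum>m\<in>{1..n'}. loeve_bound q p Vg Vf eg (Vf powr (1/p)) (real m)) \<le> young_loeve_const q p * E"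
    unfolding E_def using sum_loeve_bound_le[OF q p _ Vg0 Vf0 eg0] th by (simp add: mult.assoc add.commute)
  finally have near_c: "\<bar>RS_sum f g x nu n - f c * (g v - g u)\<bar> \<le> young_loeve_const q p * E" .
  have "\<bar>g v - g u\<bar> \<le> min eg (Vg powr (1/q))"
    using eg abs_diff_le_if_rvar_sums_bounded[OF _ Vg] uv q by auto
  also have "\<dots> \<le> eg powr (1 + q/p - q) * Vg powr (1 - 1/p)"
    using th by (intro min_le_osc_rvar_interpolation[OF eg0 Vg0 q p]) (simp add: add.commute)
  finally have "\<bar>f c - f c0\<bar> * \<bar>g v - g u\<bar> \<le> Vf powr (1/p) * (eg powr (1 + q/p - q) * Vg powr (1 - 1/p))"
    using osc_f c(1) c0 by (intro mult_mono) auto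
  then have "\<bar>(f c - f c0) * (g v - g u)\<bar> \<le> E" by (simp add: abs_mult E_def mult_ac)
  moreover have "RS_sum f g x nu n - f c0 * (g v - g u)
      = (RS_sum f g x nu n - f c * (g v - g u)) + (f c - f c0) * (g v - g u)"
    by (simp add: algebra_simps)
  ultimately have "\<bar>RS_sum f g x nu n - f c0 * (g v - g u)\<bar> \<le> young_loeve_const q p * E + E"
    using near_c abs_triangle_ineq[of "RS_sum f g x nu n - f c * (g v - g u)"] by linarith
  then show ?thesis by (simp add: E_def algebra_simps)
qed

section \<open>Refinements of tagged partitions\<close>

lemma strict_points_less_iff:
  fixes y :: "nat \<Rightarrow> real"
  assumes "\<forall>i<N. y i < y (Suc i)" "j \<le> N" "k \<le> N"
  shows "y j < y k \<longleftrightarrow> j < k"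
proof
  show "j < k \<Longrightarrow> y j < y k"
    by (rule lift_Suc_mono_less_ivl[of "{..<N}"]) (use assms in auto)
  assume "y j < y k"
  show "j < k"
  proof (rule ccontr)
    assume "\<not> j < k"
    then have "y k \<le> y j"
      by (intro lift_Suc_mono_le_ivl[of "{..<N}" y k j]) (use assms in \<open>auto simp: less_imp_le\<close>)
    with \<open>y j < y k\<close> show False by simp
  qed
qed

lemma refinement_indices:
  assumes tpP: "tagged_partition a b x nu n" and tpQ: "tagged_partition a b y mu N"
    and sub: "\<forall>i\<le>n. \<exists>j\<le>N. y j = x i"
  obtains sg where "sg 0 = 0" "sg n = N" "\<forall>i<n. sg i < sg (Suc i)" "\<forall>i\<le>n. sg i \<le> N \<and> y (sg i) = x i"
proof -
  have "\<forall>i. \<exists>j. i \<le> n \<longrightarrow> j \<le> N \<and> y j = x i" using sub by blast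
  from choice[OF this] obtain sg where sg: "\<forall>i\<le>n. sg i \<le> N \<and> y (sg i) = x i" by blast
  have ystrict: "\<forall>i<N. y i < y (Suc i)" and xstrict: "\<forall>i<n. x i < x (Suc i)"
    and ends: "x 0 = a" "x n = b" "y 0 = a" "y N = b"
    using tpP tpQ unfolding tagged_partition_def by auto
  note less_iff = strict_points_less_iff[OF ystrict]
  have "sg 0 = 0" using sg ends less_iff[of 0 "sg 0"] by auto
  moreover have "sg n = N" using sg ends less_iff[of "sg n" N] by auto
  moreover have "\<forall>i<n. sg i < sg (Suc i)"
  proof (intro allI impI)
    fix i assume "i < n"
    then show "sg i < sg (Suc i)" using sg xstrict less_iff[of "sg i" "sg (Suc i)"] by auto
  qed
  ultimately show ?thesis using that sg by blast
qed

lemma tagged_partition_segment: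
  assumes tp: "tagged_partition a b y mu N" and jk: "j < k" "k \<le> N"
  shows "tagged_partition (y j) (y k) (\<lambda>i. y (j + i)) (\<lambda>i. mu (j + i)) (k - j)"
  using tp jk unfolding tagged_partition_def by auto

lemma RS_sum_segment:
  assumes "j \<le> k"
  shows "(\<Sum>i\<in>{j..<k}. f (mu i) * (g (y (Suc i)) - g (y i)))
    = RS_sum f g (\<lambda>i. y (j + i)) (\<lambda>i. mu (j + i)) (k - j)"
  unfolding RS_sum_def using assms
  by (simp add: sum.atLeastLessThan_shift_0[of _ j] atLeast0LessThan add.commute)

lemma sum_split_at_indices:
  fixes sg :: "nat \<Rightarrow> nat" and psi :: "nat \<Rightarrow> real"
  assumes "\<forall>i<n. sg i \<le> sg (Suc i)"
  shows "(\<Sum>j\<in>{sg 0..<sg n}. psi j) = (\<Sum>i<n. \<Sum>j\<in>{sg i..<sg (Suc i)}. psi j)"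
  using assms
proof (induction n)
  case (Suc n)
  have "sg 0 \<le> sg n" by (rule lift_Suc_mono_le_ivl[of "{..<Suc n}"]) (use Suc.prems in auto)
  moreover have "sg n \<le> sg (Suc n)" using Suc.prems by simp
  ultimately have "(\<Sum>j\<in>{sg 0..<sg (Suc n)}. psi j)
      = (\<Sum>j\<in>{sg 0..<sg n}. psi j) + (\<Sum>j\<in>{sg n..<sg (Suc n)}. psi j)"
    by (simp add: sum.atLeastLessThan_concat)
  then show ?case using Suc by simp
qed simp

lemma RS_sum_refinement_diff_le:
  fixes f g :: "real \<Rightarrow> real" and be :: "nat \<Rightarrow> real"
  assumes tpP: "tagged_partition a b x nu n" and tpQ: "tagged_partition a b y mu N"
    and sub: "\<forall>i\<le>n. \<exists>j\<le>N. y j = x i"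
    and cells: "\<forall>i<n. \<forall>z mz L. tagged_partition (x i) (x (Suc i)) z mz L \<and> 0 < L \<longrightarrow>
        \<bar>RS_sum f g z mz L - f (nu i) * (g (x (Suc i)) - g (x i))\<bar> \<le> be i"
  shows "\<bar>RS_sum f g y mu N - RS_sum f g x nu n\<bar> \<le> (\<Sum>i<n. be i)"
proof -
  obtain sg where sg: "sg 0 = 0" "sg n = N" "\<forall>i<n. sg i < sg (Suc i)" "\<forall>i\<le>n. sg i \<le> N \<and> y (sg i) = x i"
    using refinement_indices[OF tpP tpQ sub] by blast
  define psi where "psi j = f (mu j) * (g (y (Suc j)) - g (y j))" for j
  have "RS_sum f g y mu N = (\<Sum>j\<in>{sg 0..<sg n}. psi j)"
    unfolding RS_sum_def psi_def sg(1,2) by (simp add: atLeast0LessThan)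
  also have "\<dots> = (\<Sum>i<n. \<Sum>j\<in>{sg i..<sg (Suc i)}. psi j)"
    using sum_split_at_indices[of n sg psi] sg(3) by (auto simp: less_imp_le)
  finally have split: "RS_sum f g y mu N = (\<Sum>i<n. \<Sum>j\<in>{sg i..<sg (Suc i)}. psi j)" .
  have cell: "\<bar>(\<Sum>j\<in>{sg i..<sg (Suc i)}. psi j) - f (nu i) * (g (x (Suc i)) - g (x i))\<bar> \<le> be i"
    if i: "i < n" for i
  proof -
    have lt: "sg i < sg (Suc i)" and le: "sg (Suc i) \<le> N" and xs: "y (sg i) = x i" "y (sg (Suc i)) = x (Suc i)"
      using sg i by auto
    have "(\<Sum>j\<in>{sg i..<sg (Suc i)}. psi j)
        = RS_sum f g (\<lambda>k. y (sg i + k)) (\<lambda>k. mu (sg i + k)) (sg (Suc i) - sg i)"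
      unfolding psi_def using lt by (intro RS_sum_segment) simp
    moreover have "tagged_partition (x i) (x (Suc i)) (\<lambda>k. y (sg i + k)) (\<lambda>k. mu (sg i + k)) (sg (Suc i) - sg i)"
      using tagged_partition_segment[OF tpQ lt le] xs by simp
    ultimately show ?thesis using cells i lt by simp
  qed
  have "RS_sum f g y mu N - RS_sum f g x nu n
      = (\<Sum>i<n. (\<Sum>j\<in>{sg i..<sg (Suc i)}. psi j) - f (nu i) * (g (x (Suc i)) - g (x i)))"
    unfolding split by (simp add: RS_sum_def sum_subtractf)
  then have "\<bar>RS_sum f g y mu N - RS_sum f g x nu n\<bar>
      \<le> (\<Sum>i<n. \<bar>(\<Sum>j\<in>{sg i..<sg (Suc i)}. psi j) - f (nu i) * (g (x (Suc i)) - g (x i))\<bar>)"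
    by (simp add: sum_abs)
  also have "\<dots> \<le> (\<Sum>i<n. be i)" by (rule sum_mono) (use cell in auto)
  finally show ?thesis .
qed

lemma tagged_partition_through_points:
  assumes fin: "finite X" and ab: "a \<in> X" "b \<in> X" and X: "X \<subseteq> {a..b}"
  obtains y N where "tagged_partition a b y y N" "\<forall>z\<in>X. \<exists>j\<le>N. y j = z"
proof -
  define ys where "ys = sorted_list_of_set X"
  have set_ys: "set ys = X" and sorted: "sorted_wrt (<) ys"
    unfolding ys_def using fin by (simp_all add: strict_sorted_list_of_set)
  have len: "0 < length ys" using ab set_ys by (cases ys) auto
  define N where "N = length ys - 1"
  define y where "y j = ys ! j" for j
  have y_in: "y j \<in> X" if "j \<le> N" for j
    using that len set_ys unfolding y_def N_def by (metis Suc_pred' le_imp_less_Suc nth_mem)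
  have y_less: "y i < y j" if "i < j" "j \<le> N" for i j
    using sorted_wrt_nth_less[OF sorted that(1)] that len unfolding y_def N_def by simp
  have enum: "\<exists>j\<le>N. y j = z" if "z \<in> X" for z
  proof -
    have "z \<in> set ys" using that set_ys by simp
    then obtain j where "j < length ys" "ys ! j = z" by (auto simp: in_set_conv_nth)
    then have "j \<le> N" "y j = z" unfolding N_def y_def by auto
    then show ?thesis by blast
  qed
  have "y 0 = a"
  proof -
    obtain j where "j \<le> N" "y j = a" using enum ab(1) by blast
    then have "y 0 \<le> a" using y_less[of 0 j] by (cases "j = 0") simp_all
    moreover have "a \<le> y 0" using y_in[of 0] X by auto
    ultimately show ?thesis by simp
  qed
  moreover have "y N = b"
  proof -
    obtain j where "j \<le> N" "y j = b" using enum ab(2) by blast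
    then have "b \<le> y N" using y_less[of j N] by (cases "j = N") simp_all
    moreover have "y N \<le> b" using y_in[of N] X by auto
    ultimately show ?thesis by simp
  qed
  moreover have "\<forall>i<N. y i < y (Suc i)" using y_less by simp
  ultimately have "tagged_partition a b y y N" unfolding tagged_partition_def by (simp add: less_imp_le)
  then show ?thesis using that enum by blast
qed

lemma common_refinement:
  assumes tp: "tagged_partition a b x nu n" "tagged_partition a b x' nu' n'"
  obtains y N where "tagged_partition a b y y N" "\<forall>i\<le>n. \<exists>j\<le>N. y j = x i" "\<forall>i\<le>n'. \<exists>j\<le>N. y j = x' i"
proof -
  define X where "X = x ` {..n} \<union> x' ` {..n'}"
  have "finite X" by (simp add: X_def)
  moreover have "a \<in> X" "b \<in> X" using tp(1) unfolding X_def tagged_partition_def by force+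
  moreover have "X \<subseteq> {a..b}"
    using tagged_partition_in_interval(1)[OF tp(1)] tagged_partition_in_interval(1)[OF tp(2)]
    unfolding X_def by auto
  ultimately obtain y N where "tagged_partition a b y y N" "\<forall>z\<in>X. \<exists>j\<le>N. y j = z"
    by (rule tagged_partition_through_points)
  then show ?thesis using that unfolding X_def by blast
qed

section \<open>Existence of the integral\<close>

lemma small_osc_cells:
  fixes f g :: "real \<Rightarrow> real"
  assumes cont: "\<forall>t\<in>{a..b}. continuous (at t within {a..b}) f \<or> continuous (at t within {a..b}) g"
    and eta: "0 < eta"
  obtains d where "0 < d" "\<And>s t. a \<le> s \<Longrightarrow> s \<le> t \<Longrightarrow> t \<le> b \<Longrightarrow> t - s < d \<Longrightarrow>
     (\<forall>u\<in>{s..t}. \<forall>v\<in>{s..t}. \<bar>f v - f u\<bar> \<le> eta) \<or> (\<forall>u\<in>{s..t}. \<forall>v\<in>{s..t}. \<bar>g v - g u\<bar> \<le> eta)"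
proof -
  define small where "small h G \<longleftrightarrow> (\<forall>u\<in>G \<inter> {a..b}. \<forall>v\<in>G \<inter> {a..b}. \<bar>h v - h u\<bar> \<le> eta)" for h G
  have ball_small: "\<exists>r>0. small h (ball c r)" if h: "continuous (at c within {a..b}) h" for h c
  proof -
    obtain r where "0 < r" and r: "\<forall>z\<in>{a..b}. dist z c < r \<longrightarrow> dist (h z) (h c) < eta/2"
      using h eta unfolding continuous_within_eps_delta by (meson half_gt_zero)
    have "\<bar>h v - h u\<bar> \<le> eta" if uv: "u \<in> ball c r \<inter> {a..b}" "v \<in> ball c r \<inter> {a..b}" for u v
    proof -
      have "\<bar>h u - h c\<bar> < eta/2" "\<bar>h v - h c\<bar> < eta/2"
        using r uv by (auto simp: dist_real_def dist_commute)
      then show ?thesis by linarith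
    qed
    then show ?thesis unfolding small_def using \<open>0 < r\<close> by blast
  qed
  define Gs where "Gs = {G. open G \<and> (small f G \<or> small g G)}"
  have "{a..b} \<subseteq> \<Union>Gs"
  proof
    fix c assume "c \<in> {a..b}"
    then obtain r where "0 < r" "small f (ball c r) \<or> small g (ball c r)"
      using cont ball_small by blast
    then show "c \<in> \<Union>Gs" unfolding Gs_def by (intro UnionI[of "ball c r"]) auto
  qed
  then obtain d where d: "0 < d" "\<And>z. z \<in> {a..b} \<Longrightarrow> \<exists>G\<in>Gs. ball z d \<subseteq> G"
    using Heine_Borel_lemma[OF compact_Icc] unfolding Gs_def by blast
  have "(\<forall>u\<in>{s..t}. \<forall>v\<in>{s..t}. \<bar>f v - f u\<bar> \<le> eta) \<or> (\<forall>u\<in>{s..t}. \<forall>v\<in>{s..t}. \<bar>g v - g u\<bar> \<le> eta)"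
    if st: "a \<le> s" "s \<le> t" "t \<le> b" "t - s < d" for s t
  proof -
    obtain G where G: "G \<in> Gs" "ball s d \<subseteq> G" using d(2)[of s] st by auto
    have "{s..t} \<subseteq> G \<inter> {a..b}" using G(2) st by (auto simp: dist_real_def subset_iff)
    then show ?thesis using G(1) unfolding Gs_def small_def by blast
  qed
  then show ?thesis using that d(1) by blast
qed

lemma RS_sum_cell_estimate:
  fixes f g :: "real \<Rightarrow> real"
  assumes p: "1 < p" and q: "1 < q" and th: "1 < 1/p + 1/q"
    and fin_f: "finite_rvar p f s t" and fin_g: "finite_rvar q g s t" and eta: "0 \<le> eta"
    and osc: "(\<forall>u\<in>{s..t}. \<forall>v\<in>{s..t}. \<bar>f v - f u\<bar> \<le> eta) \<or> (\<forall>u\<in>{s..t}. \<forall>v\<in>{s..t}. \<bar>g v - g u\<bar> \<le> eta)"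
    and tp: "tagged_partition s t z mz L" and L: "0 < L" and c0: "c0 \<in> {s..t}"
  shows "\<bar>RS_sum f g z mz L - f c0 * (g t - g s)\<bar>
     \<le> ((young_loeve_const p q + 1) * eta powr (1 + p/q - p) + (young_loeve_const q p + 1) * eta powr (1 + q/p - q))
        * (rvar p f s t + rvar q g s t)"
proof -
  define Vf where "Vf = rvar p f s t"
  define Vg where "Vg = rvar q g s t"
  define Kf where "Kf = (young_loeve_const p q + 1) * eta powr (1 + p/q - p)"
  define Kg where "Kg = (young_loeve_const q p + 1) * eta powr (1 + q/p - q)"
  have st: "s \<le> t" using tagged_partition_in_interval(3)[OF tp] .
  have Vf: "\<forall>z\<in>rvar_sums p f s t. z \<le> Vf" and Vg: "\<forall>z\<in>rvar_sums q g s t. z \<le> Vg"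
    using rvar_sums_le_rvar[OF fin_f] rvar_sums_le_rvar[OF fin_g] unfolding Vf_def Vg_def by blast+
  have Vf0: "0 \<le> Vf" and Vg0: "0 \<le> Vg" unfolding Vf_def Vg_def using rvar_nonneg fin_f fin_g st by auto
  have Kf0: "0 \<le> Kf" and Kg0: "0 \<le> Kg"
    unfolding Kf_def Kg_def using young_loeve_const_nonneg[of q p] young_loeve_const_nonneg[of p q] p q th
    by (simp_all add: add.commute)
  from osc consider "\<forall>u\<in>{s..t}. \<forall>v\<in>{s..t}. \<bar>f v - f u\<bar> \<le> eta" | "\<forall>u\<in>{s..t}. \<forall>v\<in>{s..t}. \<bar>g v - g u\<bar> \<le> eta"
    by blast
  then have "\<bar>RS_sum f g z mz L - f c0 * (g t - g s)\<bar> \<le> Kf * (Vf + Vg) + Kg * (Vf + Vg)"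
  proof cases
    case 1
    have "\<bar>RS_sum f g z mz L - f c0 * (g t - g s)\<bar> \<le> Kf * (Vf powr (1 - 1/q) * Vg powr (1 - (1 - 1/q)))"
      using RS_sum_estimate_by_osc_f[OF p q th Vf Vg 1 tp L c0] by (simp add: Kf_def mult.assoc)
    also have "\<dots> \<le> Kf * (Vf + Vg)"
      using Kf0 Vf0 Vg0 q by (intro mult_left_mono powr_interpolation_le_add) auto
    finally show ?thesis using Kg0 Vf0 Vg0 by (smt (verit) mult_nonneg_nonneg)
  next
    case 2
    have "\<bar>RS_sum f g z mz L - f c0 * (g t - g s)\<bar> \<le> Kg * (Vg powr (1 - 1/p) * Vf powr (1 - (1 - 1/p)))"
      using RS_sum_estimate_by_osc_g[OF p q th Vf Vg 2 tp L c0] by (simp add: Kg_def mult.assoc)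
    also have "\<dots> \<le> Kg * (Vf + Vg)"
      using Kg0 Vf0 Vg0 p by (subst add.commute) (intro mult_left_mono powr_interpolation_le_add, auto)
    finally show ?thesis using Kf0 Vf0 Vg0 by (smt (verit) mult_nonneg_nonneg)
  qed
  then show ?thesis by (simp add: Kf_def Kg_def Vf_def Vg_def distrib_right)
qed

lemma RS_sum_refinement_diff_le_rvar:
  fixes f g :: "real \<Rightarrow> real"
  assumes p: "1 < p" and q: "1 < q" and th: "1 < 1/p + 1/q"
    and fin_f: "finite_rvar p f a b" and fin_g: "finite_rvar q g a b" and eta: "0 \<le> eta"
    and tpP: "tagged_partition a b x nu n" and tpQ: "tagged_partition a b y mu N"
    and sub: "\<forall>i\<le>n. \<exists>j\<le>N. y j = x i"
    and osc: "\<forall>i<n. (\<forall>u\<in>{x i..x (Suc i)}. \<forall>v\<in>{x i..x (Suc i)}. \<bar>f v - f u\<bar> \<le> eta) \<or>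
                   (\<forall>u\<in>{x i..x (Suc i)}. \<forall>v\<in>{x i..x (Suc i)}. \<bar>g v - g u\<bar> \<le> eta)"
  shows "\<bar>RS_sum f g y mu N - RS_sum f g x nu n\<bar>
     \<le> ((young_loeve_const p q + 1) * eta powr (1 + p/q - p) + (young_loeve_const q p + 1) * eta powr (1 + q/p - q))
        * (rvar p f a b + rvar q g a b)"
proof -
  define M where "M = (young_loeve_const p q + 1) * eta powr (1 + p/q - p) + (young_loeve_const q p + 1) * eta powr (1 + q/p - q)"
  have M0: "0 \<le> M"
    unfolding M_def using young_loeve_const_nonneg[of q p] young_loeve_const_nonneg[of p q] p q th
    by (simp add: add.commute)
  note in_ab = tagged_partition_in_interval[OF tpP]
  have x_ends: "x 0 = a" "x n = b" and x_le: "\<forall>i<n. x i \<le> x (Suc i)"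
    and tags: "\<forall>i<n. x i \<le> nu i \<and> nu i \<le> x (Suc i)"
    using tpP unfolding tagged_partition_def by (auto simp: less_imp_le)
  have "\<bar>RS_sum f g y mu N - RS_sum f g x nu n\<bar> \<le> (\<Sum>i<n. M * (rvar p f (x i) (x (Suc i)) + rvar q g (x i) (x (Suc i))))"
  proof (rule RS_sum_refinement_diff_le[OF tpP tpQ sub], intro allI impI, elim conjE)
    fix i z mz L assume i: "i < n" and tpz: "tagged_partition (x i) (x (Suc i)) z mz L" and L: "0 < L"
    have "finite_rvar p f (x i) (x (Suc i))" "finite_rvar q g (x i) (x (Suc i))"
      using in_ab(1) i by (auto intro!: finite_rvar_subinterval[OF fin_f] finite_rvar_subinterval[OF fin_g])
    from RS_sum_cell_estimate[OF p q th this eta _ tpz L] osc tags i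
    show "\<bar>RS_sum f g z mz L - f (nu i) * (g (x (Suc i)) - g (x i))\<bar>
        \<le> M * (rvar p f (x i) (x (Suc i)) + rvar q g (x i) (x (Suc i)))"
      unfolding M_def by auto
  qed
  also have "\<dots> = M * ((\<Sum>i<n. rvar p f (x i) (x (Suc i))) + (\<Sum>i<n. rvar q g (x i) (x (Suc i))))"
    by (simp add: sum.distrib[symmetric] sum_distrib_left)
  also have "\<dots> \<le> M * (rvar p f a b + rvar q g a b)"
    using sum_rvar_le_rvar[OF fin_f in_ab(1) x_le] sum_rvar_le_rvar[OF fin_g in_ab(1) x_le] x_ends M0
    by (intro mult_left_mono add_mono) auto
  finally show ?thesis unfolding M_def .
qed

lemma ex_small_powr_combination:
  fixes bf bg Kf Kg W e :: real
  assumes "0 < bf" "0 < bg" "0 < e"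
  obtains eta where "0 < eta" "(Kf * eta powr bf + Kg * eta powr bg) * W < e"
proof -
  have "((\<lambda>x. (Kf * x powr bf + Kg * x powr bg) * W) \<longlongrightarrow> (Kf * 0 + Kg * 0) * W) (at_right 0)"
    using assms by (intro tendsto_intros tendsto_zero_powrI[OF tendsto_ident_at tendsto_const]
        eventually_at_right_less[THEN eventually_mono]) auto
  then have "\<forall>\<^sub>F x in at_right 0. (Kf * x powr bf + Kg * x powr bg) * W < e"
    using assms(3) by (intro order_tendstoD(2)) auto
  then obtain b where "0 < b" "\<forall>y>0. y < b \<longrightarrow> (Kf * y powr bf + Kg * y powr bg) * W < e"
    unfolding eventually_at_right_field by blast
  then show ?thesis using that[of "b/2"] by auto
qed

definition RS_cauchy :: "(real \<Rightarrow> real) \<Rightarrow> (real \<Rightarrow> real) \<Rightarrow> real \<Rightarrow> real \<Rightarrow> bool" where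
  "RS_cauchy f g a b \<longleftrightarrow>
     (\<forall>e>0. \<exists>d>0. \<forall>x nu n x' nu' n'. tagged_partition a b x nu n \<and> mesh_less x n d \<and>
        tagged_partition a b x' nu' n' \<and> mesh_less x' n' d \<longrightarrow>
        \<bar>RS_sum f g x nu n - RS_sum f g x' nu' n'\<bar> < e)"

lemma RS_cauchy_if_no_common_discontinuity:
  fixes f g :: "real \<Rightarrow> real"
  assumes p: "1 < p" and q: "1 < q" and th: "1 < 1/p + 1/q"
    and fin_f: "finite_rvar p f a b" and fin_g: "finite_rvar q g a b"
    and cont: "\<forall>t\<in>{a..b}. continuous (at t within {a..b}) f \<or> continuous (at t within {a..b}) g"
  shows "RS_cauchy f g a b"
  unfolding RS_cauchy_def
proof (intro allI impI)
  fix e :: real assume e: "0 < e"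
  define W where "W = rvar p f a b + rvar q g a b"
  define M where "M eta = (young_loeve_const p q + 1) * eta powr (1 + p/q - p)
    + (young_loeve_const q p + 1) * eta powr (1 + q/p - q)" for eta
  have "0 < 1 + p/q - p" "0 < 1 + q/p - q" using th p q by (simp_all add: field_simps)
  then obtain eta where eta: "0 < eta" "M eta * (2 * W + 1) < e"
    unfolding M_def using ex_small_powr_combination e by blast
  obtain d where d: "0 < d" "\<And>s t. a \<le> s \<Longrightarrow> s \<le> t \<Longrightarrow> t \<le> b \<Longrightarrow> t - s < d \<Longrightarrow>
     (\<forall>u\<in>{s..t}. \<forall>v\<in>{s..t}. \<bar>f v - f u\<bar> \<le> eta) \<or> (\<forall>u\<in>{s..t}. \<forall>v\<in>{s..t}. \<bar>g v - g u\<bar> \<le> eta)"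
    using small_osc_cells[OF cont eta(1)] by blast
  have close_to_refinement: "\<bar>RS_sum f g y y N - RS_sum f g x nu n\<bar> \<le> M eta * W"
    if tpP: "tagged_partition a b x nu n" and fine: "mesh_less x n d" and tpQ: "tagged_partition a b y y N"
      and sub: "\<forall>i\<le>n. \<exists>j\<le>N. y j = x i" for x nu n y N
  proof -
    have "\<forall>i<n. a \<le> x i \<and> x i < x (Suc i) \<and> x (Suc i) \<le> b \<and> x (Suc i) - x i < d"
      using tagged_partition_in_interval(1)[OF tpP] tpP fine unfolding tagged_partition_def mesh_less_def by auto
    then show ?thesis unfolding M_def W_def
      using d(2) by (intro RS_sum_refinement_diff_le_rvar[OF p q th fin_f fin_g _ tpP tpQ sub])
        (use eta(1) in \<open>auto simp: less_imp_le\<close>)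
  qed
  show "\<exists>d>0. \<forall>x nu n x' nu' n'. tagged_partition a b x nu n \<and> mesh_less x n d \<and>
      tagged_partition a b x' nu' n' \<and> mesh_less x' n' d \<longrightarrow>
      \<bar>RS_sum f g x nu n - RS_sum f g x' nu' n'\<bar> < e"
  proof (intro exI[of _ d] conjI d(1) allI impI, elim conjE)
    fix x nu n x' nu' n'
    assume tp: "tagged_partition a b x nu n" "tagged_partition a b x' nu' n'"
      and fine: "mesh_less x n d" "mesh_less x' n' d"
    have ab: "a \<le> b" using tagged_partition_in_interval(3)[OF tp(1)] .
    obtain y N where Q: "tagged_partition a b y y N" "\<forall>i\<le>n. \<exists>j\<le>N. y j = x i" "\<forall>i\<le>n'. \<exists>j\<le>N. y j = x' i"
      using common_refinement[OF tp] .
    have "\<bar>RS_sum f g y y N - RS_sum f g x nu n\<bar> \<le> M eta * W"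
      using close_to_refinement[OF tp(1) fine(1) Q(1,2)] .
    moreover have "\<bar>RS_sum f g y y N - RS_sum f g x' nu' n'\<bar> \<le> M eta * W"
      using close_to_refinement[OF tp(2) fine(2) Q(1,3)] .
    moreover have "0 \<le> M eta" "0 \<le> W"
      unfolding M_def W_def using young_loeve_const_nonneg[of q p] young_loeve_const_nonneg[of p q] p q th
        rvar_nonneg[OF fin_f ab] rvar_nonneg[OF fin_g ab] by (simp_all add: add.commute)
    then have "2 * (M eta * W) \<le> M eta * (2 * W + 1)" by (simp add: algebra_simps)
    then have "2 * (M eta * W) < e" using eta(2) by linarith
    ultimately show "\<bar>RS_sum f g x nu n - RS_sum f g x' nu' n'\<bar> < e" by linarith
  qed
qed

definition uniform_points :: "real \<Rightarrow> real \<Rightarrow> nat \<Rightarrow> nat \<Rightarrow> real" where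
  "uniform_points a b n i = a + real i * (b - a) / real n"

lemma uniform_partition:
  assumes "a < b" "0 < n"
  shows "tagged_partition a b (uniform_points a b n) (uniform_points a b n) n"
    "mesh_less (uniform_points a b n) n d \<longleftrightarrow> (b - a) / real n < d"
proof -
  have step: "uniform_points a b n (Suc i) - uniform_points a b n i = (b - a) / real n" for i
    using assms unfolding uniform_points_def by (simp add: field_simps)
  have "0 < (b - a) / real n" using assms by simp
  then have "uniform_points a b n i < uniform_points a b n (Suc i)" for i
    using step[of i] by linarith
  moreover have "uniform_points a b n 0 = a" "uniform_points a b n n = b"
    using assms by (simp_all add: uniform_points_def)
  ultimately show "tagged_partition a b (uniform_points a b n) (uniform_points a b n) n"
    unfolding tagged_partition_def by (simp add: less_imp_le)
  show "mesh_less (uniform_points a b n) n d \<longleftrightarrow> (b - a) / real n < d"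
    unfolding mesh_less_def step using assms by auto
qed

lemma uniform_partition_eventually_fine:
  assumes "a < b" "0 < d"
  shows "\<forall>\<^sub>F k in sequentially. mesh_less (uniform_points a b (Suc k)) (Suc k) d"
proof -
  have "((\<lambda>k. (b - a) / real (Suc k)) \<longlongrightarrow> 0) sequentially"
    by (rule LIMSEQ_Suc[OF lim_const_over_n])
  then have "\<forall>\<^sub>F k in sequentially. (b - a) / real (Suc k) < d"
    using assms(2) by (rule order_tendstoD)
  then show ?thesis using uniform_partition(2)[OF assms(1)] by simp
qed

definition uniform_RS_sum :: "(real \<Rightarrow> real) \<Rightarrow> (real \<Rightarrow> real) \<Rightarrow> real \<Rightarrow> real \<Rightarrow> nat \<Rightarrow> real" where
  "uniform_RS_sum f g a b k = RS_sum f g (uniform_points a b (Suc k)) (uniform_points a b (Suc k)) (Suc k)"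

lemma RS_sum_eventually_near_uniform:
  assumes ab: "a < b" and d: "0 < d" "\<forall>x nu n x' nu' n'. tagged_partition a b x nu n \<and> mesh_less x n d \<and>
        tagged_partition a b x' nu' n' \<and> mesh_less x' n' d \<longrightarrow> \<bar>RS_sum f g x nu n - RS_sum f g x' nu' n'\<bar> < e"
    and tp: "tagged_partition a b x nu l" "mesh_less x l d"
  shows "\<forall>\<^sub>F k in sequentially. \<bar>RS_sum f g x nu l - uniform_RS_sum f g a b k\<bar> < e"
  using uniform_partition_eventually_fine[OF ab d(1)]
proof eventually_elim
  case (elim k)
  moreover have "tagged_partition a b (uniform_points a b (Suc k)) (uniform_points a b (Suc k)) (Suc k)"
    using uniform_partition(1)[OF ab] by simp
  ultimately show ?case using d(2) tp unfolding uniform_RS_sum_def by blast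
qed

lemma Cauchy_uniform_RS_sum:
  assumes ab: "a < b" and cauchy: "RS_cauchy f g a b"
  shows "Cauchy (uniform_RS_sum f g a b)"
proof (rule CauchyI)
  fix e :: real assume "0 < e"
  then obtain d where d: "0 < d" "\<forall>x nu n x' nu' n'. tagged_partition a b x nu n \<and> mesh_less x n d \<and>
    tagged_partition a b x' nu' n' \<and> mesh_less x' n' d \<longrightarrow> \<bar>RS_sum f g x nu n - RS_sum f g x' nu' n'\<bar> < e"
    using cauchy unfolding RS_cauchy_def by blast
  then obtain M where M: "\<forall>k\<ge>M. mesh_less (uniform_points a b (Suc k)) (Suc k) d"
    using uniform_partition_eventually_fine[OF ab] unfolding eventually_sequentially by blast
  have tp: "tagged_partition a b (uniform_points a b (Suc k)) (uniform_points a b (Suc k)) (Suc k)" for k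
    using uniform_partition(1)[OF ab] by simp
  show "\<exists>M. \<forall>m\<ge>M. \<forall>n\<ge>M. norm (uniform_RS_sum f g a b m - uniform_RS_sum f g a b n) < e"
  proof (intro exI[of _ M] allI impI)
    fix m n assume "M \<le> m" "M \<le> n"
    then show "norm (uniform_RS_sum f g a b m - uniform_RS_sum f g a b n) < e"
      unfolding uniform_RS_sum_def real_norm_def using d(2) tp M by blast
  qed
qed

lemma RS_has_integral_if_cauchy:
  assumes ab: "a < b" and cauchy: "RS_cauchy f g a b"
  shows "\<exists>I. RS_has_integral f g a b I"
proof -
  obtain I where I: "uniform_RS_sum f g a b \<longlonglongrightarrow> I"
    using Cauchy_uniform_RS_sum[OF assms] real_Cauchy_convergent convergent_def by blast
  have "RS_has_integral f g a b I"
    unfolding RS_has_integral_def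
  proof (intro allI impI)
    fix e :: real assume "0 < e"
    then obtain d where d: "0 < d" "\<forall>x nu n x' nu' n'. tagged_partition a b x nu n \<and> mesh_less x n d \<and>
      tagged_partition a b x' nu' n' \<and> mesh_less x' n' d \<longrightarrow> \<bar>RS_sum f g x nu n - RS_sum f g x' nu' n'\<bar> < e/2"
      using cauchy unfolding RS_cauchy_def by (meson half_gt_zero)
    have "\<bar>RS_sum f g x nu l - I\<bar> < e" if "tagged_partition a b x nu l" "mesh_less x l d" for x nu l
    proof -
      have "((\<lambda>k. \<bar>RS_sum f g x nu l - uniform_RS_sum f g a b k\<bar>) \<longlongrightarrow> \<bar>RS_sum f g x nu l - I\<bar>) sequentially"
        by (intro tendsto_intros I)
      moreover have "\<forall>\<^sub>F k in sequentially. \<bar>RS_sum f g x nu l - uniform_RS_sum f g a b k\<bar> \<le> e/2"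
        using RS_sum_eventually_near_uniform[OF ab d that] by (simp add: eventually_mono)
      ultimately have "\<bar>RS_sum f g x nu l - I\<bar> \<le> e/2" by (rule tendsto_upperbound) simp
      then show ?thesis using \<open>0 < e\<close> by linarith
    qed
    then show "\<exists>d>0. \<forall>x nu l. tagged_partition a b x nu l \<and> mesh_less x l d \<longrightarrow> \<bar>RS_sum f g x nu l - I\<bar> < e"
      using d(1) by blast
  qed
  then show ?thesis ..
qed

lemma RS_has_integral_abs_diff_le:
  assumes ab: "a < b" and I: "RS_has_integral f g a b I"
    and bound: "\<And>x nu n. tagged_partition a b x nu n \<Longrightarrow> \<bar>RS_sum f g x nu n - c\<bar> \<le> B"
  shows "\<bar>I - c\<bar> \<le> B"
proof (rule field_le_epsilon)
  fix e :: real assume "0 < e"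
  then obtain d where d: "0 < d" "\<forall>x nu l. tagged_partition a b x nu l \<and> mesh_less x l d \<longrightarrow> \<bar>RS_sum f g x nu l - I\<bar> < e"
    using I unfolding RS_has_integral_def by blast
  then obtain k where "mesh_less (uniform_points a b (Suc k)) (Suc k) d"
    using eventually_happens'[OF _ uniform_partition_eventually_fine[OF ab d(1)]] by auto
  moreover have tp: "tagged_partition a b (uniform_points a b (Suc k)) (uniform_points a b (Suc k)) (Suc k)"
    using uniform_partition(1)[OF ab] by simp
  ultimately have "\<bar>RS_sum f g (uniform_points a b (Suc k)) (uniform_points a b (Suc k)) (Suc k) - I\<bar> < e"
    using d(2) by blast
  then show "\<bar>I - c\<bar> \<le> B + e" using bound[OF tp] by linarith
qed

lemma abs_diff_le_osc_norm:
  assumes fin: "finite_rvar r h a b" and r: "0 < r" and st: "s \<in> {a..b}" "t \<in> {a..b}"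
  shows "\<bar>h t - h s\<bar> \<le> osc_norm h a b"
proof -
  have V: "\<forall>z\<in>rvar_sums r h a b. z \<le> rvar r h a b" using rvar_sums_le_rvar[OF fin] by blast
  have "bdd_above {\<bar>h t - h s\<bar> | s t. a \<le> s \<and> s \<le> t \<and> t \<le> b}"
    using abs_diff_le_if_rvar_sums_bounded[OF r V] by (intro bdd_aboveI[where M = "rvar r h a b powr (1/r)"]) auto
  moreover have "\<bar>h t - h s\<bar> \<in> {\<bar>h t - h s\<bar> | s t. a \<le> s \<and> s \<le> t \<and> t \<le> b}"
  proof (cases "s \<le> t")
    case False
    then show ?thesis using st by (intro CollectI exI[of _ t] exI[of _ s]) (auto simp: abs_minus_commute)
  qed (use st in auto)
  ultimately show ?thesis unfolding osc_norm_def by (rule cSup_upper[rotated])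
qed

theorem corollary2:
  fixes p q :: real
  assumes "p > 1" and "q > 1" and "1 / p + 1 / q > 1"
  shows "\<exists>C::real. \<forall>(a::real) (b::real) (f::real \<Rightarrow> real) (g::real \<Rightarrow> real).
    a < b \<and>
    (\<forall>t\<in>{a..b}. continuous (at t within {a..b}) f \<or> continuous (at t within {a..b}) g) \<and>
    finite_rvar p f a b \<and> finite_rvar q g a b \<longrightarrow>
    (\<exists>I. RS_has_integral f g a b I \<and>
      \<bar>I - f a * (g b - g a)\<bar> \<le>
        C * rvar_norm p f a b powr (p - p / q) * osc_norm f a b powr (1 + p / q - p)
          * rvar_norm q g a b)"
proof (rule exI[of _ "young_loeve_const p q + 1"], intro allI impI, elim conjE)
  have p: "1 < p" and q: "1 < q" and th: "1 < 1/p + 1/q" using assms by auto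
  fix a b :: real and f g :: "real \<Rightarrow> real"
  assume ab: "a < b" and cont: "\<forall>t\<in>{a..b}. continuous (at t within {a..b}) f \<or> continuous (at t within {a..b}) g"
    and fin_f: "finite_rvar p f a b" and fin_g: "finite_rvar q g a b"
  obtain I where I: "RS_has_integral f g a b I"
    using RS_has_integral_if_cauchy[OF ab RS_cauchy_if_no_common_discontinuity[OF p q th fin_f fin_g cont]] ..
  have "\<bar>RS_sum f g x nu n - f a * (g b - g a)\<bar>
      \<le> (young_loeve_const p q + 1) * osc_norm f a b powr (1 + p/q - p) * rvar p f a b powr (1 - 1/q)
         * rvar q g a b powr (1/q)"
    if tp: "tagged_partition a b x nu n" for x nu n
  proof (rule RS_sum_estimate_by_osc_f[OF p q th _ _ _ tp])
    show "0 < n" using tp ab unfolding tagged_partition_def by (cases n) auto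
  qed (use rvar_sums_le_rvar[OF fin_f] rvar_sums_le_rvar[OF fin_g] abs_diff_le_osc_norm[OF fin_f] p ab in auto)
  then have "\<bar>I - f a * (g b - g a)\<bar>
      \<le> (young_loeve_const p q + 1) * osc_norm f a b powr (1 + p/q - p) * rvar p f a b powr (1 - 1/q)
         * rvar q g a b powr (1/q)"
    by (rule RS_has_integral_abs_diff_le[OF ab I])
  moreover have "1/p * (p - p/q) = 1 - 1/q" using p by (simp add: field_simps)
  then have "rvar_norm p f a b powr (p - p/q) = rvar p f a b powr (1 - 1/q)"
    unfolding rvar_norm_def by (simp only: powr_powr)
  ultimately show "\<exists>I. RS_has_integral f g a b I \<and> \<bar>I - f a * (g b - g a)\<bar>
      \<le> (young_loeve_const p q + 1) * rvar_norm p f a b powr (p - p / q) * osc_norm f a b powr (1 + p / q - p)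
         * rvar_norm q g a b"
    using I unfolding rvar_norm_def by (auto simp: mult_ac)
qed

end
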